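(* Let $\mathcal D$ be a preduoidal category with monoidal structures $(\circ,\bot)$ and $(\bullet,1)$, and let $T$ be a separately opmonoidal monad on $\mathcal D$. Equip $\mathcal D^T$ with the two lifted monoidal structures $(\mathcal D^T,\circ,(\bot,T^\circ_0))$ and $(\mathcal D^T,\bullet,(1,T^\bullet_0))$. Then R-matrices $(R,\nu,\varpi,\iota)$ on $T$ are in bijective correspondence with duoidal structures $(\xi,\nu,\varpi,\iota)$ on $\mathcal D^T$ (with respect to these two lifted monoidal structures), the structure morphisms $\nu,\varpi,\iota$ being the same on both sides. Explicitly, an R-matrix $R$ yields the interchange law $$\xi_{(a,\alpha),(b,\beta),(c,\gamma),(d,\delta)} := ((\alpha\circ\gamma)\bullet(\beta\circ\delta))\cdot R_{a,b,c,d}\colon (a\bullet b)\circ(c\bullet d)\to(a\circ c)\bullet(b\circ d)$$ for all $T$-algebras $(a,\alpha),(b,\beta),(c,\gamma),(d,\delta)$; conversely an interchange law $\xi$ on $\mathcal D^T$ yields $$R_{a,b,c,d} := \xi_{Ta,Tb,Tc,Td}\cdot\big((\eta_a\bullet\eta_b)\circ(\eta_c\bullet\eta_d)\big)\colon (a\bullet b)\circ(c\bullet d)\to (Ta\circ Tc)\bullet(Tb\circ Td)$$ for all objects $a,b,c,d$ of $\mathcal D$ (where $Ta$ denotes the free algebra $(Ta,\mu_a)$). These two constructions are mutually inverse.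
   Context: Composition of morphisms is written $g\cdot f$ ($f$ first), to avoid clash with the tensor product $\circ$. A preduoidal category is a category $\mathcal D$ with two monoidal structures $(\circ,\bot)$ and $(\bullet,1)$ (associators $\alpha$, left/right unitors $\lambda^\circ,\rho^\circ$ for $\circ$ and $\lambda^\bullet,\rho^\bullet$ for $\bullet$). A bimonad on a monoidal category $(\mathcal C,\otimes,I)$ is a monad $(B,\mu,\eta)$ with an opmonoidal structure $B_2\colon B(x\otimes y)\to Bx\otimes By$, $B_0\colon BI\to I$ such that $\mu,\eta$ are opmonoidal natural transformations. A separately opmonoidal monad on $\mathcal D$ is a monad $(T,\mu,\eta)$ together with a bimonad structure $(T^\circ_2,T^\circ_0)$ on $(\mathcal D,\circ,\bot)$ and a bimonad structure $(T^\bullet_2,T^\bullet_0)$ on $(\mathcal D,\bullet,1)$. Then the Eilenberg–Moore category $\mathcal D^T$ of $T$-algebras has lifted monoidal structures: $(a,\alpha)\circ(b,\beta)=(a\circ b,(\alpha\circ\beta)\cdot T^\circ_{2,a,b})$ with unit $(\bot,T^\circ_0)$, and $(a,\alpha)\bullet(b,\beta)=(a\bullet b,(\alpha\bullet\beta)\cdot T^\bullet_{2,a,b})$ with unit $(1,T^\bullet_0)$; the forgetful functor is strict monoidal for both. Duoidal category: a preduoidal category with a natural transformation $\zeta_{x,y,a,b}\colon (x\bullet y)\circ(a\bullet b)\to(x\circ a)\bullet(y\circ b)$ and morphisms $\nu\colon\bot\to\bot\bullet\bot$, $\varpi\colon 1\circ 1\to 1$, $\iota\colon\bot\to 1$ such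 that $(1,\varpi,\iota)$ is a monoid in $(\mathcal D,\circ,\bot)$, $(\bot,\nu,\iota)$ is a comonoid in $(\mathcal D,\bullet,1)$, and: (A1) $(\alpha\bullet\alpha)\cdot\zeta_{x\circ a,y\circ b,c,d}\cdot(\zeta_{x,y,a,b}\circ\mathrm{id}) = \zeta_{x,y,a\circ c,b\circ d}\cdot(\mathrm{id}\circ\zeta_{a,b,c,d})\cdot\alpha$ as maps $((x\bullet y)\circ(a\bullet b))\circ(c\bullet d)\to(x\circ(a\circ c))\bullet(y\circ(b\circ d))$; (A2) $\alpha\cdot(\zeta_{x,a,y,b}\bullet\mathrm{id})\cdot\zeta_{x\bullet a,c,y\bullet b,d} = (\mathrm{id}\bullet\zeta_{a,c,b,d})\cdot\zeta_{x,a\bullet c,y,b\bullet d}\cdot(\alpha\circ\alpha)$ as maps $((x\bullet a)\bullet c)\circ((y\bullet b)\bullet d)\to(x\circ y)\bullet((a\circ b)\bullet(c\circ d))$; (U) $\zeta_{\bot,\bot,a,b}\cdot(\nu\circ\mathrm{id})=((\lambda^\circ_a)^{-1}\bullet(\lambda^\circ_b)^{-1})\cdot\lambda^\circ_{a\bullet b}$, $\zeta_{a,b,\bot,\bot}\cdot(\mathrm{id}\circ\nu)=((\rho^\circ_a)^{-1}\bullet(\rho^\circ_b)^{-1})\cdot\rho^\circ_{a\bullet b}$, $(\varpi\bullet\mathrm{id})\cdot\zeta_{1,a,1,b}=(\lambda^\bullet_{a\circ b})^{-1}\cdot(\lambda^\bullet_a\circ\lambda^\bullet_b)$, $(\mathrm{id}\bullet\varpi)\cdot\zeta_{a,1,b,1}=(\rho^\bullet_{a\circ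 b})^{-1}\cdot(\rho^\bullet_a\circ\rho^\bullet_b)$. A duoidal structure on $\mathcal D^T$ means such data $(\xi,\nu,\varpi,\iota)$ for the lifted monoidal structures, with $\xi$ a natural family of morphisms of $T$-algebras and $\nu,\varpi,\iota$ morphisms of $T$-algebras. R-matrix on a separately opmonoidal monad $T$: a natural transformation $R_{a,b,c,d}\colon (a\bullet b)\circ(c\bullet d)\to(Ta\circ Tc)\bullet(Tb\circ Td)$ ($a,b,c,d\in\mathcal D$) together with morphisms of $T$-algebras $\nu\colon(\bot,T^\circ_0)\to(\bot,T^\circ_0)\bullet(\bot,T^\circ_0)$, $\varpi\colon(1,T^\bullet_0)\circ(1,T^\bullet_0)\to(1,T^\bullet_0)$, $\iota\colon(\bot,T^\circ_0)\to(1,T^\bullet_0)$, such that $(1,\varpi,\iota)$ is a monoid in $(\mathcal D^T,\circ,\bot)$, $(\bot,\nu,\iota)$ is a comonoid in $(\mathcal D^T,\bullet,1)$, and (associators suppressed, i.e. inserted canonically): (R-unit) for all $T$-algebras $(a,\alpha),(b,\beta)$: $((T^\circ_0\circ\alpha)\bullet(T^\circ_0\circ\beta))\cdot R_{\bot,\bot,a,b}\cdot(\nu\circ\mathrm{id})=((\lambda^\circ_a)^{-1}\bullet(\lambda^\circ_b)^{-1})\cdot\lambda^\circ_{a\bullet b}$; $((\alpha\circ T^\circ_0)\bullet(\beta\circ T^\circ_0))\cdot R_{a,b,\bot,\bot}\cdot(\mathrm{id}\circ\nu)=((\rho^\circ_a)^{-1}\bullet(\rho^\circ_b)^{-1})\cdot\rho^\circ_{a\bullet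 b}$; $(\varpi\bullet\mathrm{id})\cdot((T^\bullet_0\circ T^\bullet_0)\bullet(\alpha\circ\beta))\cdot R_{1,a,1,b}=(\lambda^\bullet_{a\circ b})^{-1}\cdot(\lambda^\bullet_a\circ\lambda^\bullet_b)$; $(\mathrm{id}\bullet\varpi)\cdot((\alpha\circ\beta)\bullet(T^\bullet_0\circ T^\bullet_0))\cdot R_{a,1,b,1}=(\rho^\bullet_{a\circ b})^{-1}\cdot(\rho^\bullet_a\circ\rho^\bullet_b)$. (R-lift) for all objects $a,b,c,d$: $((\mu_a\circ\mu_c)\bullet(\mu_b\circ\mu_d))\cdot R_{Ta,Tb,Tc,Td}\cdot(T^\bullet_{2,a,b}\circ T^\bullet_{2,c,d})\cdot T^\circ_{2,a\bullet b,c\bullet d} = ((\mu_a\circ\mu_c)\bullet(\mu_b\circ\mu_d))\cdot(T^\circ_{2,Ta,Tc}\bullet T^\circ_{2,Tb,Td})\cdot T^\bullet_{2,Ta\circ Tc,Tb\circ Td}\cdot TR_{a,b,c,d}$. (R-1) for all objects $a,b,c,d,x,y$, as maps $(a\bullet b)\circ(c\bullet d)\circ(x\bullet y)\to(Ta\circ Tc\circ Tx)\bullet(Tb\circ Td\circ Ty)$: $((\mu_a\circ\mu_c\circ Tx)\bullet(\mu_b\circ\mu_d\circ Ty))\cdot((T^\circ_{2,Ta,Tc}\circ Tx)\bullet(T^\circ_{2,Tb,Td}\circ Ty))\cdot R_{Ta\circ Tc,Tb\circ Td,x,y}\cdot(R_{a,b,c,d}\circ\mathrm{id}) = ((Ta\circ\mu_c\circ\mu_x)\bullet(Tb\circ\mu_d\circ\mu_y))\cdot((Ta\circ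 T^\circ_{2,Tc,Tx})\bullet(Tb\circ T^\circ_{2,Td,Ty}))\cdot R_{a,b,Tc\circ Tx,Td\circ Ty}\cdot(\mathrm{id}\circ R_{c,d,x,y})$. (R-2) for all objects $x,a,c,y,b,d$, as maps $((x\bullet a)\bullet c)\circ((y\bullet b)\bullet d)\to(Tx\circ Ty)\bullet(Ta\circ Tb)\bullet(Tc\circ Td)$: $(((\mu_x\circ\mu_y)\bullet(\mu_a\circ\mu_b))\bullet\mathrm{id})\cdot(R_{Tx,Ta,Ty,Tb}\bullet\mathrm{id})\cdot((T^\bullet_{2,x,a}\circ T^\bullet_{2,y,b})\bullet\mathrm{id})\cdot R_{x\bullet a,c,y\bullet b,d} = (\mathrm{id}\bullet((\mu_a\circ\mu_b)\bullet(\mu_c\circ\mu_d)))\cdot(\mathrm{id}\bullet R_{Ta,Tc,Tb,Td})\cdot(\mathrm{id}\bullet(T^\bullet_{2,a,c}\circ T^\bullet_{2,b,d}))\cdot R_{x,a\bullet c,y,b\bullet d}\cdot(\alpha\circ\alpha)$. A quasitriangular structure on $T$ is an R-matrix on $T$. *)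

theory Defs
  imports Main
begin

section \<open>Categories (objects = elements of a type, arrows = a set)\<close>

text \<open>Composition: cmp C g f is g after f (f first), i.e. the paper's g.f\<close>

record ('o,'m) cat =
  arr :: "'m set"
  dm  :: "'m \<Rightarrow> 'o"
  cd  :: "'m \<Rightarrow> 'o"
  idm :: "'o \<Rightarrow> 'm"
  cmp :: "'m \<Rightarrow> 'm \<Rightarrow> 'm"

text \<open>Monoidal structure: tensor on objects and arrows, unit, associator
  (a x b) x c -> a x (b x c), left unitor I x a -> a, right unitor a x I -> a\<close>

record ('o,'m) monoidal =
  tobj  :: "'o \<Rightarrow> 'o \<Rightarrow> 'o"
  tarr  :: "'m \<Rightarrow> 'm \<Rightarrow> 'm"
  munit :: "'o"
  asc   :: "'o \<Rightarrow> 'o \<Rightarrow> 'o \<Rightarrow> 'm"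
  lu    :: "'o \<Rightarrow> 'm"
  ru    :: "'o \<Rightarrow> 'm"

record ('o,'m) monad =
  Tob :: "'o \<Rightarrow> 'o"
  Tar :: "'m \<Rightarrow> 'm"
  mu  :: "'o \<Rightarrow> 'm"
  eta :: "'o \<Rightarrow> 'm"

locale cat_ctx =
  fixes C :: "('o,'m) cat"
begin

abbreviation comp (infixr "\<cdot>" 55) where "g \<cdot> f \<equiv> cmp C g f"
abbreviation Id where "Id a \<equiv> idm C a"

definition Hom :: "'o \<Rightarrow> 'o \<Rightarrow> 'm set" where
  "Hom a b = {f \<in> arr C. dm C f = a \<and> cd C f = b}"

definition category :: bool where
  "category \<longleftrightarrow>
     (\<forall>a. Id a \<in> Hom a a) \<and>
     (\<forall>a b c f g. f \<in> Hom a b \<longrightarrow> g \<in> Hom b c \<longrightarrow> g \<cdot> f \<in> Hom a c) \<and>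
     (\<forall>a b f. f \<in> Hom a b \<longrightarrow> f \<cdot> Id a = f \<and> Id b \<cdot> f = f) \<and>
     (\<forall>a b c d f g h. f \<in> Hom a b \<longrightarrow> g \<in> Hom b c \<longrightarrow> h \<in> Hom c d \<longrightarrow>
        h \<cdot> (g \<cdot> f) = (h \<cdot> g) \<cdot> f)"

definition is_iso :: "'m \<Rightarrow> bool" where
  "is_iso f \<longleftrightarrow> f \<in> arr C \<and>
     (\<exists>g \<in> Hom (cd C f) (dm C f). g \<cdot> f = Id (dm C f) \<and> f \<cdot> g = Id (cd C f))"

definition inv :: "'m \<Rightarrow> 'm" where
  "inv f = (SOME g. g \<in> Hom (cd C f) (dm C f) \<and> g \<cdot> f = Id (dm C f) \<and> f \<cdot> g = Id (cd C f))"

definition endofunctor :: "('o \<Rightarrow> 'o) \<Rightarrow> ('m \<Rightarrow> 'm) \<Rightarrow> bool" where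
  "endofunctor Fo Fm \<longleftrightarrow>
     (\<forall>a b f. f \<in> Hom a b \<longrightarrow> Fm f \<in> Hom (Fo a) (Fo b)) \<and>
     (\<forall>a. Fm (Id a) = Id (Fo a)) \<and>
     (\<forall>a b c f g. f \<in> Hom a b \<longrightarrow> g \<in> Hom b c \<longrightarrow> Fm (g \<cdot> f) = Fm g \<cdot> Fm f)"

definition is_monoidal :: "('o,'m) monoidal \<Rightarrow> bool" where
  "is_monoidal M \<longleftrightarrow>
     (\<forall>a b c d f g. f \<in> Hom a b \<longrightarrow> g \<in> Hom c d \<longrightarrow>
        tarr M f g \<in> Hom (tobj M a c) (tobj M b d)) \<and>
     (\<forall>a b. tarr M (Id a) (Id b) = Id (tobj M a b)) \<and>
     (\<forall>a b c x y z f f' g g'. f \<in> Hom a b \<longrightarrow> f' \<in> Hom b c \<longrightarrow> g \<in> Hom x y \<longrightarrow> g' \<in> Hom y z \<longrightarrow>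
        tarr M (f' \<cdot> f) (g' \<cdot> g) = tarr M f' g' \<cdot> tarr M f g) \<and>
     (\<forall>a b c. asc M a b c \<in> Hom (tobj M (tobj M a b) c) (tobj M a (tobj M b c)) \<and> is_iso (asc M a b c)) \<and>
     (\<forall>a a' b b' c c' f g h. f \<in> Hom a a' \<longrightarrow> g \<in> Hom b b' \<longrightarrow> h \<in> Hom c c' \<longrightarrow>
        asc M a' b' c' \<cdot> tarr M (tarr M f g) h = tarr M f (tarr M g h) \<cdot> asc M a b c) \<and>
     (\<forall>a. lu M a \<in> Hom (tobj M (munit M) a) a \<and> is_iso (lu M a)) \<and>
     (\<forall>a b f. f \<in> Hom a b \<longrightarrow> f \<cdot> lu M a = lu M b \<cdot> tarr M (Id (munit M)) f) \<and>
     (\<forall>a. ru M a \<in> Hom (tobj M a (munit M)) a \<and> is_iso (ru M a)) \<and>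
     (\<forall>a b f. f \<in> Hom a b \<longrightarrow> f \<cdot> ru M a = ru M b \<cdot> tarr M f (Id (munit M))) \<and>
     (\<forall>a b c d. asc M a b (tobj M c d) \<cdot> asc M (tobj M a b) c d =
        tarr M (Id a) (asc M b c d) \<cdot> asc M a (tobj M b c) d \<cdot> tarr M (asc M a b c) (Id d)) \<and>
     (\<forall>a b. tarr M (Id a) (lu M b) \<cdot> asc M a (munit M) b = tarr M (ru M a) (Id b))"

definition is_monad :: "('o,'m) monad \<Rightarrow> bool" where
  "is_monad T \<longleftrightarrow>
     endofunctor (Tob T) (Tar T) \<and>
     (\<forall>a. mu T a \<in> Hom (Tob T (Tob T a)) (Tob T a)) \<and>
     (\<forall>a. eta T a \<in> Hom a (Tob T a)) \<and>
     (\<forall>a b f. f \<in> Hom a b \<longrightarrow> Tar T f \<cdot> mu T a = mu T b \<cdot> Tar T (Tar T f)) \<and>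
     (\<forall>a b f. f \<in> Hom a b \<longrightarrow> Tar T f \<cdot> eta T a = eta T b \<cdot> f) \<and>
     (\<forall>a. mu T a \<cdot> Tar T (mu T a) = mu T a \<cdot> mu T (Tob T a)) \<and>
     (\<forall>a. mu T a \<cdot> eta T (Tob T a) = Id (Tob T a)) \<and>
     (\<forall>a. mu T a \<cdot> Tar T (eta T a) = Id (Tob T a))"

definition is_bimonad :: "('o,'m) monoidal \<Rightarrow> ('o,'m) monad \<Rightarrow> ('o \<Rightarrow> 'o \<Rightarrow> 'm) \<Rightarrow> 'm \<Rightarrow> bool" where
  "is_bimonad M T T2 T0 \<longleftrightarrow>
     (\<forall>x y. T2 x y \<in> Hom (Tob T (tobj M x y)) (tobj M (Tob T x) (Tob T y))) \<and>
     T0 \<in> Hom (Tob T (munit M)) (munit M) \<and>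
     (\<forall>x x' y y' f g. f \<in> Hom x x' \<longrightarrow> g \<in> Hom y y' \<longrightarrow>
        T2 x' y' \<cdot> Tar T (tarr M f g) = tarr M (Tar T f) (Tar T g) \<cdot> T2 x y) \<and>
     (\<forall>x y z. asc M (Tob T x) (Tob T y) (Tob T z) \<cdot> tarr M (T2 x y) (Id (Tob T z)) \<cdot> T2 (tobj M x y) z =
        tarr M (Id (Tob T x)) (T2 y z) \<cdot> T2 x (tobj M y z) \<cdot> Tar T (asc M x y z)) \<and>
     (\<forall>x. tarr M T0 (Id (Tob T x)) \<cdot> T2 (munit M) x = inv (lu M (Tob T x)) \<cdot> Tar T (lu M x)) \<and>
     (\<forall>x. tarr M (Id (Tob T x)) T0 \<cdot> T2 x (munit M) = inv (ru M (Tob T x)) \<cdot> Tar T (ru M x)) \<and>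
     (\<forall>x y. T2 x y \<cdot> mu T (tobj M x y) =
        tarr M (mu T x) (mu T y) \<cdot> T2 (Tob T x) (Tob T y) \<cdot> Tar T (T2 x y)) \<and>
     T0 \<cdot> mu T (munit M) = T0 \<cdot> Tar T T0 \<and>
     (\<forall>x y. T2 x y \<cdot> eta T (tobj M x y) = tarr M (eta T x) (eta T y)) \<and>
     T0 \<cdot> eta T (munit M) = Id (munit M)"

definition is_alg :: "('o,'m) monad \<Rightarrow> 'o \<times> 'm \<Rightarrow> bool" where
  "is_alg T A \<longleftrightarrow> snd A \<in> Hom (Tob T (fst A)) (fst A) \<and>
     snd A \<cdot> eta T (fst A) = Id (fst A) \<and>
     snd A \<cdot> Tar T (snd A) = snd A \<cdot> mu T (fst A)"

definition alg_hom :: "('o,'m) monad \<Rightarrow> 'o \<times> 'm \<Rightarrow> 'o \<times> 'm \<Rightarrow> 'm \<Rightarrow> bool" where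
  "alg_hom T A B f \<longleftrightarrow> is_alg T A \<and> is_alg T B \<and> f \<in> Hom (fst A) (fst B) \<and>
     f \<cdot> snd A = snd B \<cdot> Tar T f"

definition lift :: "('o,'m) monoidal \<Rightarrow> ('o \<Rightarrow> 'o \<Rightarrow> 'm) \<Rightarrow> 'o \<times> 'm \<Rightarrow> 'o \<times> 'm \<Rightarrow> 'o \<times> 'm" where
  "lift M T2 A B = (tobj M (fst A) (fst B), tarr M (snd A) (snd B) \<cdot> T2 (fst A) (fst B))"

definition is_monoid :: "('o,'m) monoidal \<Rightarrow> 'm \<Rightarrow> 'm \<Rightarrow> 'o \<Rightarrow> bool" where
  "is_monoid M m u x \<longleftrightarrow> m \<in> Hom (tobj M x x) x \<and> u \<in> Hom (munit M) x \<and>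
     m \<cdot> tarr M m (Id x) = m \<cdot> tarr M (Id x) m \<cdot> asc M x x x \<and>
     m \<cdot> tarr M u (Id x) = lu M x \<and>
     m \<cdot> tarr M (Id x) u = ru M x"

definition is_comonoid :: "('o,'m) monoidal \<Rightarrow> 'm \<Rightarrow> 'm \<Rightarrow> 'o \<Rightarrow> bool" where
  "is_comonoid M d e x \<longleftrightarrow> d \<in> Hom x (tobj M x x) \<and> e \<in> Hom x (munit M) \<and>
     asc M x x x \<cdot> tarr M d (Id x) \<cdot> d = tarr M (Id x) d \<cdot> d \<and>
     tarr M e (Id x) \<cdot> d = inv (lu M x) \<and>
     tarr M (Id x) e \<cdot> d = inv (ru M x)"

end

text \<open>Context: category C, circ-structure Mo = (o, bot), bullet-structure Mb = (., 1),
  monad T with bimonad structures (To2, To0) for Mo and (Tb2, Tb0) for Mb.\<close>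

locale duo_ctx = cat_ctx C
  for C :: "('o,'m) cat" +
  fixes Mo :: "('o,'m) monoidal" and Mb :: "('o,'m) monoidal"
    and T :: "('o,'m) monad"
    and To2 :: "'o \<Rightarrow> 'o \<Rightarrow> 'm" and To0 :: "'m"
    and Tb2 :: "'o \<Rightarrow> 'o \<Rightarrow> 'm" and Tb0 :: "'m"
begin

abbreviation oo where "oo \<equiv> tobj Mo"
abbreviation om where "om \<equiv> tarr Mo"
abbreviation bo where "bo \<equiv> tobj Mb"
abbreviation bm where "bm \<equiv> tarr Mb"
abbreviation bot where "bot \<equiv> munit Mo"
abbreviation one where "one \<equiv> munit Mb"
abbreviation To where "To \<equiv> Tob T"
abbreviation Tm where "Tm \<equiv> Tar T"
abbreviation botA where "botA \<equiv> (bot, To0)"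
abbreviation oneA where "oneA \<equiv> (one, Tb0)"
abbreviation liftO where "liftO \<equiv> lift Mo To2"
abbreviation liftB where "liftB \<equiv> lift Mb Tb2"
abbreviation free where "free a \<equiv> (Tob T a, mu T a)"

definition preduoidal :: bool where
  "preduoidal \<longleftrightarrow> category \<and> is_monoidal Mo \<and> is_monoidal Mb"

definition sep_opmonoidal_monad :: bool where
  "sep_opmonoidal_monad \<longleftrightarrow> is_monad T \<and> is_bimonad Mo T To2 To0 \<and> is_bimonad Mb T Tb2 Tb0"

definition unit_data :: "'m \<Rightarrow> 'm \<Rightarrow> 'm \<Rightarrow> bool" where
  "unit_data nu varpi iota \<longleftrightarrow>
     alg_hom T botA (liftB botA botA) nu \<and>
     alg_hom T (liftO oneA oneA) oneA varpi \<and>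
     alg_hom T botA oneA iota \<and>
     is_monoid Mo varpi iota one \<and>
     is_comonoid Mb nu iota bot"

definition duoidal_EM :: "('o \<times> 'm \<Rightarrow> 'o \<times> 'm \<Rightarrow> 'o \<times> 'm \<Rightarrow> 'o \<times> 'm \<Rightarrow> 'm) \<Rightarrow> 'm \<Rightarrow> 'm \<Rightarrow> 'm \<Rightarrow> bool" where
  "duoidal_EM xi nu varpi iota \<longleftrightarrow>
     unit_data nu varpi iota \<and>
     (\<forall>X Y A B. is_alg T X \<longrightarrow> is_alg T Y \<longrightarrow> is_alg T A \<longrightarrow> is_alg T B \<longrightarrow>
        alg_hom T (liftO (liftB X Y) (liftB A B)) (liftB (liftO X A) (liftO Y B)) (xi X Y A B)) \<and>
     (\<forall>X X' Y Y' A A' B B' f g h k.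
        alg_hom T X X' f \<longrightarrow> alg_hom T Y Y' g \<longrightarrow> alg_hom T A A' h \<longrightarrow> alg_hom T B B' k \<longrightarrow>
        xi X' Y' A' B' \<cdot> om (bm f g) (bm h k) = bm (om f h) (om g k) \<cdot> xi X Y A B) \<and>
     (\<forall>X Y A B Cc D. is_alg T X \<longrightarrow> is_alg T Y \<longrightarrow> is_alg T A \<longrightarrow> is_alg T B \<longrightarrow>
        is_alg T Cc \<longrightarrow> is_alg T D \<longrightarrow>
        bm (asc Mo (fst X) (fst A) (fst Cc)) (asc Mo (fst Y) (fst B) (fst D))
          \<cdot> xi (liftO X A) (liftO Y B) Cc D \<cdot> om (xi X Y A B) (Id (bo (fst Cc) (fst D)))
        = xi X Y (liftO A Cc) (liftO B D) \<cdot> om (Id (bo (fst X) (fst Y))) (xi A B Cc D)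
          \<cdot> asc Mo (bo (fst X) (fst Y)) (bo (fst A) (fst B)) (bo (fst Cc) (fst D))) \<and>
     (\<forall>X A Cc Y B D. is_alg T X \<longrightarrow> is_alg T Y \<longrightarrow> is_alg T A \<longrightarrow> is_alg T B \<longrightarrow>
        is_alg T Cc \<longrightarrow> is_alg T D \<longrightarrow>
        asc Mb (oo (fst X) (fst Y)) (oo (fst A) (fst B)) (oo (fst Cc) (fst D))
          \<cdot> bm (xi X A Y B) (Id (oo (fst Cc) (fst D))) \<cdot> xi (liftB X A) Cc (liftB Y B) D
        = bm (Id (oo (fst X) (fst Y))) (xi A Cc B D) \<cdot> xi X (liftB A Cc) Y (liftB B D)
          \<cdot> om (asc Mb (fst X) (fst A) (fst Cc)) (asc Mb (fst Y) (fst B) (fst D))) \<and>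
     (\<forall>A B. is_alg T A \<longrightarrow> is_alg T B \<longrightarrow>
        xi botA botA A B \<cdot> om nu (Id (bo (fst A) (fst B)))
          = bm (inv (lu Mo (fst A))) (inv (lu Mo (fst B))) \<cdot> lu Mo (bo (fst A) (fst B)) \<and>
        xi A B botA botA \<cdot> om (Id (bo (fst A) (fst B))) nu
          = bm (inv (ru Mo (fst A))) (inv (ru Mo (fst B))) \<cdot> ru Mo (bo (fst A) (fst B)) \<and>
        bm varpi (Id (oo (fst A) (fst B))) \<cdot> xi oneA A oneA B
          = inv (lu Mb (oo (fst A) (fst B))) \<cdot> om (lu Mb (fst A)) (lu Mb (fst B)) \<and>
        bm (Id (oo (fst A) (fst B))) varpi \<cdot> xi A oneA B oneA
          = inv (ru Mb (oo (fst A) (fst B))) \<cdot> om (ru Mb (fst A)) (ru Mb (fst B)))"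

text \<open>R-matrix (R, nu, varpi, iota) on the separately opmonoidal monad T
  (associators inserted explicitly)\<close>

definition rmatrix :: "('o \<Rightarrow> 'o \<Rightarrow> 'o \<Rightarrow> 'o \<Rightarrow> 'm) \<Rightarrow> 'm \<Rightarrow> 'm \<Rightarrow> 'm \<Rightarrow> bool" where
  "rmatrix R nu varpi iota \<longleftrightarrow>
     unit_data nu varpi iota \<and>
     (\<forall>a b c d. R a b c d \<in> Hom (oo (bo a b) (bo c d)) (bo (oo (To a) (To c)) (oo (To b) (To d)))) \<and>
     (\<forall>a a' b b' c c' d d' f g h k.
        f \<in> Hom a a' \<longrightarrow> g \<in> Hom b b' \<longrightarrow> h \<in> Hom c c' \<longrightarrow> k \<in> Hom d d' \<longrightarrow>
        R a' b' c' d' \<cdot> om (bm f g) (bm h k) = bm (om (Tm f) (Tm h)) (om (Tm g) (Tm k)) \<cdot> R a b c d) \<and>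
     \<comment> \<open>R-unit\<close>
     (\<forall>A B. is_alg T A \<longrightarrow> is_alg T B \<longrightarrow>
        bm (om To0 (snd A)) (om To0 (snd B)) \<cdot> R bot bot (fst A) (fst B) \<cdot> om nu (Id (bo (fst A) (fst B)))
          = bm (inv (lu Mo (fst A))) (inv (lu Mo (fst B))) \<cdot> lu Mo (bo (fst A) (fst B)) \<and>
        bm (om (snd A) To0) (om (snd B) To0) \<cdot> R (fst A) (fst B) bot bot \<cdot> om (Id (bo (fst A) (fst B))) nu
          = bm (inv (ru Mo (fst A))) (inv (ru Mo (fst B))) \<cdot> ru Mo (bo (fst A) (fst B)) \<and>
        bm varpi (Id (oo (fst A) (fst B))) \<cdot> bm (om Tb0 Tb0) (om (snd A) (snd B)) \<cdot> R one (fst A) one (fst B)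
          = inv (lu Mb (oo (fst A) (fst B))) \<cdot> om (lu Mb (fst A)) (lu Mb (fst B)) \<and>
        bm (Id (oo (fst A) (fst B))) varpi \<cdot> bm (om (snd A) (snd B)) (om Tb0 Tb0) \<cdot> R (fst A) one (fst B) one
          = inv (ru Mb (oo (fst A) (fst B))) \<cdot> om (ru Mb (fst A)) (ru Mb (fst B))) \<and>
     \<comment> \<open>R-lift\<close>
     (\<forall>a b c d.
        bm (om (mu T a) (mu T c)) (om (mu T b) (mu T d)) \<cdot> R (To a) (To b) (To c) (To d)
          \<cdot> om (Tb2 a b) (Tb2 c d) \<cdot> To2 (bo a b) (bo c d)
        = bm (om (mu T a) (mu T c)) (om (mu T b) (mu T d))
          \<cdot> bm (To2 (To a) (To c)) (To2 (To b) (To d)) \<cdot> Tb2 (oo (To a) (To c)) (oo (To b) (To d))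
          \<cdot> Tm (R a b c d)) \<and>
     \<comment> \<open>R-1\<close>
     (\<forall>a b c d x y.
        bm (asc Mo (To a) (To c) (To x)) (asc Mo (To b) (To d) (To y))
          \<cdot> bm (om (om (mu T a) (mu T c)) (Id (To x))) (om (om (mu T b) (mu T d)) (Id (To y)))
          \<cdot> bm (om (To2 (To a) (To c)) (Id (To x))) (om (To2 (To b) (To d)) (Id (To y)))
          \<cdot> R (oo (To a) (To c)) (oo (To b) (To d)) x y \<cdot> om (R a b c d) (Id (bo x y))
        = bm (om (Id (To a)) (om (mu T c) (mu T x))) (om (Id (To b)) (om (mu T d) (mu T y)))
          \<cdot> bm (om (Id (To a)) (To2 (To c) (To x))) (om (Id (To b)) (To2 (To d) (To y)))
          \<cdot> R a b (oo (To c) (To x)) (oo (To d) (To y)) \<cdot> om (Id (bo a b)) (R c d x y)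
          \<cdot> asc Mo (bo a b) (bo c d) (bo x y)) \<and>
     \<comment> \<open>R-2\<close>
     (\<forall>x a c y b d.
        asc Mb (oo (To x) (To y)) (oo (To a) (To b)) (oo (To c) (To d))
          \<cdot> bm (bm (om (mu T x) (mu T y)) (om (mu T a) (mu T b))) (Id (oo (To c) (To d)))
          \<cdot> bm (R (To x) (To a) (To y) (To b)) (Id (oo (To c) (To d)))
          \<cdot> bm (om (Tb2 x a) (Tb2 y b)) (Id (oo (To c) (To d)))
          \<cdot> R (bo x a) c (bo y b) d
        = bm (Id (oo (To x) (To y))) (bm (om (mu T a) (mu T b)) (om (mu T c) (mu T d)))
          \<cdot> bm (Id (oo (To x) (To y))) (R (To a) (To c) (To b) (To d))
          \<cdot> bm (Id (oo (To x) (To y))) (om (Tb2 a c) (Tb2 b d))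
          \<cdot> R x (bo a c) y (bo b d)
          \<cdot> om (asc Mb x a c) (asc Mb y b d))"

definition xi_of :: "('o \<Rightarrow> 'o \<Rightarrow> 'o \<Rightarrow> 'o \<Rightarrow> 'm) \<Rightarrow> 'o \<times> 'm \<Rightarrow> 'o \<times> 'm \<Rightarrow> 'o \<times> 'm \<Rightarrow> 'o \<times> 'm \<Rightarrow> 'm" where
  "xi_of R X Y A B = bm (om (snd X) (snd A)) (om (snd Y) (snd B)) \<cdot> R (fst X) (fst Y) (fst A) (fst B)"

definition R_of :: "('o \<times> 'm \<Rightarrow> 'o \<times> 'm \<Rightarrow> 'o \<times> 'm \<Rightarrow> 'o \<times> 'm \<Rightarrow> 'm) \<Rightarrow> 'o \<Rightarrow> 'o \<Rightarrow> 'o \<Rightarrow> 'o \<Rightarrow> 'm" where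
  "R_of xi a b c d = xi (free a) (free b) (free c) (free d) \<cdot> om (bm (eta T a) (eta T b)) (bm (eta T c) (eta T d))"

end

end

theory Submission
  imports Defs
begin

(*
  An R-matrix R and an interchange law xi on D^T determine each other through a single identity:
  for T-algebras X, Y, A, B and arrows f: p \<rightarrow> fst X, g: q \<rightarrow> fst Y, h: r \<rightarrow> fst A, k: s \<rightarrow> fst B,

    xi X Y A B \<cdot> ((f \<bullet> g) \<circ> (h \<bullet> k)) = ((f\<^sup># \<circ> h\<^sup>#) \<bullet> (g\<^sup># \<circ> k\<^sup>#)) \<cdot> R p q r s,
    where f\<^sup># = snd X \<cdot> T f is the algebra map out of the free algebra on p transposing f.

  Given R, the law xi_of R satisfies it by naturality of R; given xi, the matrix R_of xi satisfies it
  by naturality of xi in algebra maps, because f = f\<^sup># \<cdot> \<eta>. Taking for f identities, resp. units,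
  shows that xi_of R agrees with xi on algebras and that R_of xi = R. The identity also carries each
  axiom across: (R-lift) says precisely that xi consists of algebra maps, (R-1) and (R-2) are the
  two associativity axioms of xi read on free algebras, and (R-unit) is the unit axiom.
*)

section \<open>Monoidal structures, monads and their algebras\<close>

locale category_laws = cat_ctx C for C :: "('o,'m) cat" +
  assumes category: category
begin

lemma Hom_iff: "f \<in> Hom a b \<longleftrightarrow> f \<in> arr C \<and> dm C f = a \<and> cd C f = b"
  unfolding Hom_def by simp

lemma arr_in_Hom: "f \<in> arr C \<Longrightarrow> f \<in> Hom (dm C f) (cd C f)"
  by (simp add: Hom_iff)

lemma comp_in_Hom: "f \<in> Hom a b \<Longrightarrow> g \<in> Hom b c \<Longrightarrow> g \<cdot> f \<in> Hom a c"
  and Id_in_Hom: "Id a \<in> Hom a a"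
  and comp_Id_Hom: "f \<in> Hom a b \<Longrightarrow> f \<cdot> Id a = f"
  and Id_comp_Hom: "f \<in> Hom a b \<Longrightarrow> Id b \<cdot> f = f"
  and comp_assoc_Hom: "f \<in> Hom a b \<Longrightarrow> g \<in> Hom b c \<Longrightarrow> h \<in> Hom c d \<Longrightarrow> h \<cdot> (g \<cdot> f) = (h \<cdot> g) \<cdot> f"
  using category unfolding category_def by fast+

lemma comp_simps [simp]:
  assumes "f \<in> arr C" "g \<in> arr C" "dm C g = cd C f"
  shows "g \<cdot> f \<in> arr C" "dm C (g \<cdot> f) = dm C f" "cd C (g \<cdot> f) = cd C g"
  using comp_in_Hom[of f _ _ g] assms by (simp_all add: Hom_iff)

lemma comp_assoc [simp]:
  assumes "f \<in> arr C" "g \<in> arr C" "h \<in> arr C" "dm C g = cd C f" "dm C h = cd C g"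
  shows "(h \<cdot> g) \<cdot> f = h \<cdot> g \<cdot> f"
  using comp_assoc_Hom[of f _ _ g _ h] assms by (simp add: Hom_iff)

lemma Id_simps [simp]: "Id a \<in> arr C" "dm C (Id a) = a" "cd C (Id a) = a"
  using Id_in_Hom[of a] by (simp_all add: Hom_iff)

lemma comp_Id [simp]: "f \<in> arr C \<Longrightarrow> dm C f = a \<Longrightarrow> f \<cdot> Id a = f"
  and Id_comp [simp]: "f \<in> arr C \<Longrightarrow> cd C f = b \<Longrightarrow> Id b \<cdot> f = f"
  using comp_Id_Hom Id_comp_Hom arr_in_Hom by blast+

text \<open>Composites are kept right-nested by the simp rule comp_assoc; the following lemma lets an
  equation between two-fold composites rewrite the head of such a normal form.\<close>

lemma comp_eq_comp_right:
  assumes "g \<cdot> f = k" "f \<in> arr C" "g \<in> arr C" "dm C g = cd C f" "e \<in> arr C" "cd C e = dm C f"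
  shows "g \<cdot> f \<cdot> e = k \<cdot> e"
  using assms comp_assoc[of e f g] by simp

lemma fst_lift [simp]: "fst (lift M T2 X Y) = tobj M (fst X) (fst Y)"
  and snd_lift [simp]: "snd (lift M T2 X Y) = tarr M (snd X) (snd Y) \<cdot> T2 (fst X) (fst Y)"
  unfolding lift_def by simp_all

end

locale monoidal_laws = category_laws C for C :: "('o,'m) cat" +
  fixes M :: "('o,'m) monoidal"
  assumes monoidal: "is_monoidal M"
begin

lemma tarr_in_Hom: "f \<in> Hom a b \<Longrightarrow> g \<in> Hom c d \<Longrightarrow> tarr M f g \<in> Hom (tobj M a c) (tobj M b d)"
  and asc_in_Hom: "asc M a b c \<in> Hom (tobj M (tobj M a b) c) (tobj M a (tobj M b c))"
  using monoidal unfolding is_monoidal_def by metis+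

lemma tarr_Id [simp]: "tarr M (Id a) (Id b) = Id (tobj M a b)"
  and tarr_comp_Hom: "f \<in> Hom a b \<Longrightarrow> f' \<in> Hom b c \<Longrightarrow> g \<in> Hom x y \<Longrightarrow> g' \<in> Hom y z \<Longrightarrow>
    tarr M (f' \<cdot> f) (g' \<cdot> g) = tarr M f' g' \<cdot> tarr M f g"
  and asc_nat_Hom: "f \<in> Hom a a' \<Longrightarrow> g \<in> Hom b b' \<Longrightarrow> h \<in> Hom c c' \<Longrightarrow>
    asc M a' b' c' \<cdot> tarr M (tarr M f g) h = tarr M f (tarr M g h) \<cdot> asc M a b c"
  using monoidal unfolding is_monoidal_def by fast+

lemma tarr_simps [simp]:
  assumes "f \<in> arr C" "g \<in> arr C"
  shows "tarr M f g \<in> arr C" "dm C (tarr M f g) = tobj M (dm C f) (dm C g)"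
    "cd C (tarr M f g) = tobj M (cd C f) (cd C g)"
  using tarr_in_Hom[OF arr_in_Hom arr_in_Hom, of f g] assms by (simp_all add: Hom_iff)

lemma tarr_comp:
  assumes "f \<in> arr C" "g \<in> arr C" "f' \<in> arr C" "g' \<in> arr C"
    "dm C f' = cd C f" "dm C g' = cd C g"
  shows "tarr M f' g' \<cdot> tarr M f g = tarr M (f' \<cdot> f) (g' \<cdot> g)"
  using tarr_comp_Hom[of f _ _ f' _ g _ _ g'] assms by (simp add: Hom_iff)

lemma tarr_comp_assoc:
  assumes "f \<in> arr C" "g \<in> arr C" "f' \<in> arr C" "g' \<in> arr C"
    "dm C f' = cd C f" "dm C g' = cd C g" "e \<in> arr C" "cd C e = tobj M (dm C f) (dm C g)"
  shows "tarr M f' g' \<cdot> tarr M f g \<cdot> e = tarr M (f' \<cdot> f) (g' \<cdot> g) \<cdot> e"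
  using assms comp_eq_comp_right[OF tarr_comp] by simp

lemmas tarr_merge = tarr_comp tarr_comp_assoc

lemma asc_simps [simp]:
  "asc M a b c \<in> arr C" "dm C (asc M a b c) = tobj M (tobj M a b) c"
  "cd C (asc M a b c) = tobj M a (tobj M b c)"
  using asc_in_Hom[of a b c] by (simp_all add: Hom_iff)

lemma asc_nat:
  assumes "f \<in> arr C" "g \<in> arr C" "h \<in> arr C"
  shows "asc M (cd C f) (cd C g) (cd C h) \<cdot> tarr M (tarr M f g) h
     = tarr M f (tarr M g h) \<cdot> asc M (dm C f) (dm C g) (dm C h)"
  using asc_nat_Hom[OF arr_in_Hom arr_in_Hom arr_in_Hom] assms .

end

locale monad_laws = category_laws C for C :: "('o,'m) cat" +
  fixes T :: "('o,'m) monad"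
  assumes monad: "is_monad T"
begin

lemma Tar_in_Hom: "f \<in> Hom a b \<Longrightarrow> Tar T f \<in> Hom (Tob T a) (Tob T b)"
  using monad unfolding is_monad_def endofunctor_def by metis

lemma Tar_Id [simp]: "Tar T (Id a) = Id (Tob T a)"
  and Tar_comp_Hom: "f \<in> Hom a b \<Longrightarrow> g \<in> Hom b c \<Longrightarrow> Tar T (g \<cdot> f) = Tar T g \<cdot> Tar T f"
  using monad unfolding is_monad_def endofunctor_def by fast+

lemma mu_in_Hom: "mu T a \<in> Hom (Tob T (Tob T a)) (Tob T a)"
  and eta_in_Hom: "eta T a \<in> Hom a (Tob T a)"
  using monad unfolding is_monad_def by metis+

lemma mu_nat_Hom: "f \<in> Hom a b \<Longrightarrow> Tar T f \<cdot> mu T a = mu T b \<cdot> Tar T (Tar T f)"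
  and eta_nat_Hom: "f \<in> Hom a b \<Longrightarrow> Tar T f \<cdot> eta T a = eta T b \<cdot> f"
  and mu_assoc: "mu T a \<cdot> Tar T (mu T a) = mu T a \<cdot> mu T (Tob T a)"
  and mu_eta_Tob [simp]: "mu T a \<cdot> eta T (Tob T a) = Id (Tob T a)"
  and mu_Tar_eta [simp]: "mu T a \<cdot> Tar T (eta T a) = Id (Tob T a)"
  using monad unfolding is_monad_def by fast+

lemma Tar_simps [simp]:
  assumes "f \<in> arr C"
  shows "Tar T f \<in> arr C" "dm C (Tar T f) = Tob T (dm C f)" "cd C (Tar T f) = Tob T (cd C f)"
  using Tar_in_Hom[OF arr_in_Hom] assms by (simp_all add: Hom_iff)

lemma Tar_comp [simp]:
  assumes "f \<in> arr C" "g \<in> arr C" "dm C g = cd C f"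
  shows "Tar T (g \<cdot> f) = Tar T g \<cdot> Tar T f"
  using Tar_comp_Hom[of f _ _ g] assms by (simp add: Hom_iff)

lemma mu_simps [simp]: "mu T a \<in> arr C" "dm C (mu T a) = Tob T (Tob T a)" "cd C (mu T a) = Tob T a"
  and eta_simps [simp]: "eta T a \<in> arr C" "dm C (eta T a) = a" "cd C (eta T a) = Tob T a"
  using mu_in_Hom[of a] eta_in_Hom[of a] by (simp_all add: Hom_iff)

lemma mu_nat: "f \<in> arr C \<Longrightarrow> Tar T f \<cdot> mu T (dm C f) = mu T (cd C f) \<cdot> Tar T (Tar T f)"
  and eta_nat: "f \<in> arr C \<Longrightarrow> Tar T f \<cdot> eta T (dm C f) = eta T (cd C f) \<cdot> f"
  by (simp_all add: mu_nat_Hom eta_nat_Hom arr_in_Hom)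

lemma mu_Tar_eta_comp [simp]:
  "f \<in> arr C \<Longrightarrow> cd C f = Tob T a \<Longrightarrow> mu T a \<cdot> Tar T (eta T a) \<cdot> f = f"
  using comp_eq_comp_right[OF mu_Tar_eta[of a], where e = f] by simp

lemma is_alg_iff: "is_alg T X \<longleftrightarrow> snd X \<in> arr C \<and> dm C (snd X) = Tob T (fst X) \<and>
    cd C (snd X) = fst X \<and> snd X \<cdot> eta T (fst X) = Id (fst X) \<and>
    snd X \<cdot> Tar T (snd X) = snd X \<cdot> mu T (fst X)"
  unfolding is_alg_def Hom_iff by auto

lemma alg_hom_iff: "alg_hom T X Y f \<longleftrightarrow> is_alg T X \<and> is_alg T Y \<and>
    f \<in> arr C \<and> dm C f = fst X \<and> cd C f = fst Y \<and> f \<cdot> snd X = snd Y \<cdot> Tar T f"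
  unfolding alg_hom_def Hom_iff by auto

lemma is_alg_simps [simp]:
  assumes "is_alg T X"
  shows "snd X \<in> arr C" "dm C (snd X) = Tob T (fst X)" "cd C (snd X) = fst X"
    "snd X \<cdot> eta T (fst X) = Id (fst X)"
  using assms unfolding is_alg_iff by auto

lemma is_alg_mult: "is_alg T X \<Longrightarrow> snd X \<cdot> Tar T (snd X) = snd X \<cdot> mu T (fst X)"
  unfolding is_alg_iff by simp

lemma is_alg_unit_comp [simp]:
  "is_alg T X \<Longrightarrow> f \<in> arr C \<Longrightarrow> cd C f = fst X \<Longrightarrow> snd X \<cdot> eta T (fst X) \<cdot> f = f"
  using comp_eq_comp_right[of "snd X" "eta T (fst X)" "Id (fst X)" f] by simp

lemma is_alg_free [simp]: "is_alg T (Tob T a, mu T a)"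
  unfolding is_alg_iff by (simp add: mu_assoc)

lemma alg_hom_struct: "is_alg T X \<Longrightarrow> alg_hom T (Tob T (fst X), mu T (fst X)) X (snd X)"
  unfolding alg_hom_iff by (simp add: is_alg_mult)

lemma alg_hom_transpose:
  assumes X: "is_alg T X" and f: "f \<in> arr C" "cd C f = fst X"
  shows "alg_hom T (Tob T (dm C f), mu T (dm C f)) X (snd X \<cdot> Tar T f)"
proof -
  have "(snd X \<cdot> Tar T f) \<cdot> mu T (dm C f) = snd X \<cdot> mu T (fst X) \<cdot> Tar T (Tar T f)"
    using X f mu_nat[OF f(1)] by simp
  also have "\<dots> = snd X \<cdot> Tar T (snd X) \<cdot> Tar T (Tar T f)"
    using X f comp_eq_comp_right[OF is_alg_mult[OF X, symmetric]] by simp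
  also have "\<dots> = snd X \<cdot> Tar T (snd X \<cdot> Tar T f)"
    using X f by simp
  finally show ?thesis
    using X f unfolding alg_hom_iff by simp
qed

lemma transpose_comp_eta:
  assumes X: "is_alg T X" and f: "f \<in> arr C" "cd C f = fst X"
  shows "snd X \<cdot> Tar T f \<cdot> eta T (dm C f) = f"
proof -
  have "snd X \<cdot> Tar T f \<cdot> eta T (dm C f) = snd X \<cdot> eta T (fst X) \<cdot> f"
    using X f eta_nat[OF f(1)] by simp
  then show ?thesis
    using X f by simp
qed

end

locale bimonad_laws = monoidal_laws C M + monad_laws C T
  for C :: "('o,'m) cat" and M and T +
  fixes T2 :: "'o \<Rightarrow> 'o \<Rightarrow> 'm" and T0 :: 'm
  assumes bimonad: "is_bimonad M T T2 T0"
begin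

lemma T2_in_Hom: "T2 x y \<in> Hom (Tob T (tobj M x y)) (tobj M (Tob T x) (Tob T y))"
  and T0_in_Hom: "T0 \<in> Hom (Tob T (munit M)) (munit M)"
  using bimonad unfolding is_bimonad_def by metis+

lemma T2_nat_Hom: "f \<in> Hom x x' \<Longrightarrow> g \<in> Hom y y' \<Longrightarrow>
    T2 x' y' \<cdot> Tar T (tarr M f g) = tarr M (Tar T f) (Tar T g) \<cdot> T2 x y"
  and T2_mu: "T2 x y \<cdot> mu T (tobj M x y) =
    tarr M (mu T x) (mu T y) \<cdot> T2 (Tob T x) (Tob T y) \<cdot> Tar T (T2 x y)"
  and T0_mu: "T0 \<cdot> mu T (munit M) = T0 \<cdot> Tar T T0"
  and T2_eta: "T2 x y \<cdot> eta T (tobj M x y) = tarr M (eta T x) (eta T y)"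
  and T0_eta: "T0 \<cdot> eta T (munit M) = Id (munit M)"
  using bimonad unfolding is_bimonad_def by fast+

lemma T2_simps [simp]: "T2 x y \<in> arr C" "dm C (T2 x y) = Tob T (tobj M x y)"
    "cd C (T2 x y) = tobj M (Tob T x) (Tob T y)"
  and T0_simps [simp]: "T0 \<in> arr C" "dm C T0 = Tob T (munit M)" "cd C T0 = munit M"
  using T2_in_Hom[of x y] T0_in_Hom by (simp_all add: Hom_iff)

lemma T2_nat:
  "f \<in> arr C \<Longrightarrow> g \<in> arr C \<Longrightarrow>
    T2 (cd C f) (cd C g) \<cdot> Tar T (tarr M f g) = tarr M (Tar T f) (Tar T g) \<cdot> T2 (dm C f) (dm C g)"
  by (simp add: T2_nat_Hom arr_in_Hom)

lemma is_alg_munit [simp]: "is_alg T (munit M, T0)"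
  unfolding is_alg_iff using T0_eta T0_mu by simp

lemma is_alg_lift [simp]:
  assumes X: "is_alg T X" and Y: "is_alg T Y"
  shows "is_alg T (lift M T2 X Y)"
proof -
  let ?L = "lift M T2 X Y"
  have nat: "T2 (fst X) (fst Y) \<cdot> Tar T (tarr M (snd X) (snd Y))
      = tarr M (Tar T (snd X)) (Tar T (snd Y)) \<cdot> T2 (Tob T (fst X)) (Tob T (fst Y))"
    using X Y T2_nat[of "snd X" "snd Y"] by simp
  have "snd ?L \<cdot> Tar T (snd ?L) = tarr M (snd X) (snd Y) \<cdot> tarr M (Tar T (snd X)) (Tar T (snd Y))
      \<cdot> T2 (Tob T (fst X)) (Tob T (fst Y)) \<cdot> Tar T (T2 (fst X) (fst Y))"
    using X Y comp_eq_comp_right[OF nat] by simp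
  also have "\<dots> = tarr M (snd X \<cdot> mu T (fst X)) (snd Y \<cdot> mu T (fst Y))
      \<cdot> T2 (Tob T (fst X)) (Tob T (fst Y)) \<cdot> Tar T (T2 (fst X) (fst Y))"
    using X Y by (simp add: tarr_merge is_alg_mult)
  also have "\<dots> = snd ?L \<cdot> mu T (fst ?L)"
    using X Y by (simp add: tarr_merge T2_mu)
  finally have mult: "snd ?L \<cdot> Tar T (snd ?L) = snd ?L \<cdot> mu T (fst ?L)" .
  have unit: "snd ?L \<cdot> eta T (fst ?L) = Id (fst ?L)"
    using X Y by (simp add: T2_eta tarr_merge)
  show ?thesis
    unfolding is_alg_iff using X Y mult unit by simp
qed

lemma alg_hom_tarr:
  assumes f: "alg_hom T X X' f" and g: "alg_hom T Y Y' g"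
  shows "alg_hom T (lift M T2 X Y) (lift M T2 X' Y') (tarr M f g)"
proof -
  have [simp]: "is_alg T X" "is_alg T X'" "is_alg T Y" "is_alg T Y'"
    "f \<in> arr C" "dm C f = fst X" "cd C f = fst X'"
    "g \<in> arr C" "dm C g = fst Y" "cd C g = fst Y'"
    and f_hom: "f \<cdot> snd X = snd X' \<cdot> Tar T f" and g_hom: "g \<cdot> snd Y = snd Y' \<cdot> Tar T g"
    using f g unfolding alg_hom_iff by auto
  have nat: "T2 (fst X') (fst Y') \<cdot> Tar T (tarr M f g)
      = tarr M (Tar T f) (Tar T g) \<cdot> T2 (fst X) (fst Y)"
    using T2_nat[of f g] by simp
  have "snd (lift M T2 X' Y') \<cdot> Tar T (tarr M f g)
      = tarr M (snd X') (snd Y') \<cdot> tarr M (Tar T f) (Tar T g) \<cdot> T2 (fst X) (fst Y)"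
    by (simp add: nat)
  also have "\<dots> = tarr M f g \<cdot> snd (lift M T2 X Y)"
    by (simp add: tarr_merge f_hom g_hom)
  finally show ?thesis
    unfolding alg_hom_iff by simp
qed

lemma lift_Tar_tarr_struct:
  assumes "is_alg T X" "is_alg T Y"
  shows "snd (lift M T2 X Y) \<cdot> Tar T (tarr M (snd X) (snd Y))
    = tarr M (snd X) (snd Y) \<cdot> tarr M (mu T (fst X)) (mu T (fst Y)) \<cdot> T2 (Tob T (fst X)) (Tob T (fst Y))"
  using alg_hom_tarr[OF alg_hom_struct alg_hom_struct, OF assms] assms
  unfolding alg_hom_iff by simp

lemma asc_comp_tarr_lift_struct:
  assumes X: "is_alg T X" and Y: "is_alg T Y" and Z: "is_alg T Z"
  shows "asc M (fst X) (fst Y) (fst Z)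
      \<cdot> tarr M (tarr M (snd X) (snd Y) \<cdot> T2 (fst X) (fst Y) \<cdot> Tar T (tarr M (snd X) (snd Y))) (snd Z)
    = tarr M (snd X) (tarr M (snd Y) (snd Z)) \<cdot> asc M (Tob T (fst X)) (Tob T (fst Y)) (Tob T (fst Z))
      \<cdot> tarr M (tarr M (mu T (fst X)) (mu T (fst Y)) \<cdot> T2 (Tob T (fst X)) (Tob T (fst Y))) (Id (Tob T (fst Z)))"
proof -
  let ?W = "tarr M (mu T (fst X)) (mu T (fst Y)) \<cdot> T2 (Tob T (fst X)) (Tob T (fst Y))"
  have "asc M (fst X) (fst Y) (fst Z)
      \<cdot> tarr M (tarr M (snd X) (snd Y) \<cdot> T2 (fst X) (fst Y) \<cdot> Tar T (tarr M (snd X) (snd Y))) (snd Z)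
    = asc M (fst X) (fst Y) (fst Z) \<cdot> tarr M (tarr M (snd X) (snd Y)) (snd Z) \<cdot> tarr M ?W (Id (Tob T (fst Z)))"
    using X Y Z lift_Tar_tarr_struct[OF X Y] by (simp add: tarr_comp)
  also have "\<dots> = tarr M (snd X) (tarr M (snd Y) (snd Z)) \<cdot> asc M (Tob T (fst X)) (Tob T (fst Y)) (Tob T (fst Z))
      \<cdot> tarr M ?W (Id (Tob T (fst Z)))"
    using X Y Z comp_eq_comp_right[OF asc_nat[of "snd X" "snd Y" "snd Z"], where e = "tarr M ?W (Id (Tob T (fst Z)))"]
    by simp
  finally show ?thesis .
qed

lemma tarr_lift_struct:
  assumes X: "is_alg T X" and Y: "is_alg T Y" and Z: "is_alg T Z"
  shows "tarr M (snd X) (tarr M (snd Y) (snd Z) \<cdot> T2 (fst Y) (fst Z) \<cdot> Tar T (tarr M (snd Y) (snd Z)))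
    = tarr M (snd X) (tarr M (snd Y) (snd Z))
      \<cdot> tarr M (Id (Tob T (fst X))) (tarr M (mu T (fst Y)) (mu T (fst Z)) \<cdot> T2 (Tob T (fst Y)) (Tob T (fst Z)))"
  using X Y Z lift_Tar_tarr_struct[OF Y Z] by (simp add: tarr_comp)

lemma lift_free_Tar_eta:
  "snd (lift M T2 (Tob T x, mu T x) (Tob T y, mu T y)) \<cdot> Tar T (tarr M (eta T x) (eta T y)) = T2 x y"
proof -
  have "T2 (Tob T x) (Tob T y) \<cdot> Tar T (tarr M (eta T x) (eta T y))
      = tarr M (Tar T (eta T x)) (Tar T (eta T y)) \<cdot> T2 x y"
    using T2_nat[of "eta T x" "eta T y"] by simp
  then show ?thesis
    by (simp add: tarr_merge)
qed

end

section \<open>The axioms of duoidal structures and of R-matrices\<close>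

type_synonym ('o, 'm) interchange = "'o \<times> 'm \<Rightarrow> 'o \<times> 'm \<Rightarrow> 'o \<times> 'm \<Rightarrow> 'o \<times> 'm \<Rightarrow> 'm"
type_synonym ('o, 'm) matrix = "'o \<Rightarrow> 'o \<Rightarrow> 'o \<Rightarrow> 'o \<Rightarrow> 'm"

text \<open>The clauses of duoidal_EM and rmatrix; in the paper's numbering xi_assoc_circ,
  xi_assoc_bullet and xi_unital are (A1), (A2) and (U), while R_assoc_circ and R_assoc_bullet
  are (R-1) and (R-2).\<close>

context duo_ctx
begin

definition xi_alg_hom :: "('o, 'm) interchange \<Rightarrow> bool" where
  "xi_alg_hom xi \<longleftrightarrow>
     (\<forall>X Y A B. is_alg T X \<longrightarrow> is_alg T Y \<longrightarrow> is_alg T A \<longrightarrow> is_alg T B \<longrightarrow>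
       alg_hom T (liftO (liftB X Y) (liftB A B)) (liftB (liftO X A) (liftO Y B)) (xi X Y A B))"

definition xi_natural :: "('o, 'm) interchange \<Rightarrow> bool" where
  "xi_natural xi \<longleftrightarrow>
     (\<forall>X X' Y Y' A A' B B' f g h k.
       alg_hom T X X' f \<longrightarrow> alg_hom T Y Y' g \<longrightarrow> alg_hom T A A' h \<longrightarrow> alg_hom T B B' k \<longrightarrow>
       xi X' Y' A' B' \<cdot> om (bm f g) (bm h k) = bm (om f h) (om g k) \<cdot> xi X Y A B)"

definition xi_assoc_circ :: "('o, 'm) interchange \<Rightarrow> bool" where
  "xi_assoc_circ xi \<longleftrightarrow>
     (\<forall>X Y A B Cc D. is_alg T X \<longrightarrow> is_alg T Y \<longrightarrow> is_alg T A \<longrightarrow> is_alg T B \<longrightarrow>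
       is_alg T Cc \<longrightarrow> is_alg T D \<longrightarrow>
       bm (asc Mo (fst X) (fst A) (fst Cc)) (asc Mo (fst Y) (fst B) (fst D))
         \<cdot> xi (liftO X A) (liftO Y B) Cc D \<cdot> om (xi X Y A B) (Id (bo (fst Cc) (fst D)))
       = xi X Y (liftO A Cc) (liftO B D) \<cdot> om (Id (bo (fst X) (fst Y))) (xi A B Cc D)
         \<cdot> asc Mo (bo (fst X) (fst Y)) (bo (fst A) (fst B)) (bo (fst Cc) (fst D)))"

definition xi_assoc_bullet :: "('o, 'm) interchange \<Rightarrow> bool" where
  "xi_assoc_bullet xi \<longleftrightarrow>
     (\<forall>X A Cc Y B D. is_alg T X \<longrightarrow> is_alg T Y \<longrightarrow> is_alg T A \<longrightarrow> is_alg T B \<longrightarrow>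
       is_alg T Cc \<longrightarrow> is_alg T D \<longrightarrow>
       asc Mb (oo (fst X) (fst Y)) (oo (fst A) (fst B)) (oo (fst Cc) (fst D))
         \<cdot> bm (xi X A Y B) (Id (oo (fst Cc) (fst D))) \<cdot> xi (liftB X A) Cc (liftB Y B) D
       = bm (Id (oo (fst X) (fst Y))) (xi A Cc B D) \<cdot> xi X (liftB A Cc) Y (liftB B D)
         \<cdot> om (asc Mb (fst X) (fst A) (fst Cc)) (asc Mb (fst Y) (fst B) (fst D)))"

definition xi_unital :: "('o, 'm) interchange \<Rightarrow> 'm \<Rightarrow> 'm \<Rightarrow> bool" where
  "xi_unital xi nu varpi \<longleftrightarrow>
     (\<forall>A B. is_alg T A \<longrightarrow> is_alg T B \<longrightarrow>
       xi botA botA A B \<cdot> om nu (Id (bo (fst A) (fst B)))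
         = bm (inv (lu Mo (fst A))) (inv (lu Mo (fst B))) \<cdot> lu Mo (bo (fst A) (fst B)) \<and>
       xi A B botA botA \<cdot> om (Id (bo (fst A) (fst B))) nu
         = bm (inv (ru Mo (fst A))) (inv (ru Mo (fst B))) \<cdot> ru Mo (bo (fst A) (fst B)) \<and>
       bm varpi (Id (oo (fst A) (fst B))) \<cdot> xi oneA A oneA B
         = inv (lu Mb (oo (fst A) (fst B))) \<cdot> om (lu Mb (fst A)) (lu Mb (fst B)) \<and>
       bm (Id (oo (fst A) (fst B))) varpi \<cdot> xi A oneA B oneA
         = inv (ru Mb (oo (fst A) (fst B))) \<cdot> om (ru Mb (fst A)) (ru Mb (fst B)))"

definition R_natural :: "('o, 'm) matrix \<Rightarrow> bool" where
  "R_natural R \<longleftrightarrow>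
     (\<forall>a a' b b' c c' d d' f g h k.
       f \<in> Hom a a' \<longrightarrow> g \<in> Hom b b' \<longrightarrow> h \<in> Hom c c' \<longrightarrow> k \<in> Hom d d' \<longrightarrow>
       R a' b' c' d' \<cdot> om (bm f g) (bm h k) = bm (om (Tm f) (Tm h)) (om (Tm g) (Tm k)) \<cdot> R a b c d)"

definition R_unital :: "('o, 'm) matrix \<Rightarrow> 'm \<Rightarrow> 'm \<Rightarrow> bool" where
  "R_unital R nu varpi \<longleftrightarrow>
     (\<forall>A B. is_alg T A \<longrightarrow> is_alg T B \<longrightarrow>
       bm (om To0 (snd A)) (om To0 (snd B)) \<cdot> R bot bot (fst A) (fst B) \<cdot> om nu (Id (bo (fst A) (fst B)))
         = bm (inv (lu Mo (fst A))) (inv (lu Mo (fst B))) \<cdot> lu Mo (bo (fst A) (fst B)) \<and>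
       bm (om (snd A) To0) (om (snd B) To0) \<cdot> R (fst A) (fst B) bot bot \<cdot> om (Id (bo (fst A) (fst B))) nu
         = bm (inv (ru Mo (fst A))) (inv (ru Mo (fst B))) \<cdot> ru Mo (bo (fst A) (fst B)) \<and>
       bm varpi (Id (oo (fst A) (fst B))) \<cdot> bm (om Tb0 Tb0) (om (snd A) (snd B)) \<cdot> R one (fst A) one (fst B)
         = inv (lu Mb (oo (fst A) (fst B))) \<cdot> om (lu Mb (fst A)) (lu Mb (fst B)) \<and>
       bm (Id (oo (fst A) (fst B))) varpi \<cdot> bm (om (snd A) (snd B)) (om Tb0 Tb0) \<cdot> R (fst A) one (fst B) one
         = inv (ru Mb (oo (fst A) (fst B))) \<cdot> om (ru Mb (fst A)) (ru Mb (fst B)))"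

definition R_lift :: "('o, 'm) matrix \<Rightarrow> bool" where
  "R_lift R \<longleftrightarrow>
     (\<forall>a b c d.
       bm (om (mu T a) (mu T c)) (om (mu T b) (mu T d)) \<cdot> R (To a) (To b) (To c) (To d)
         \<cdot> om (Tb2 a b) (Tb2 c d) \<cdot> To2 (bo a b) (bo c d)
       = bm (om (mu T a) (mu T c)) (om (mu T b) (mu T d))
         \<cdot> bm (To2 (To a) (To c)) (To2 (To b) (To d)) \<cdot> Tb2 (oo (To a) (To c)) (oo (To b) (To d))
         \<cdot> Tm (R a b c d))"

definition R_assoc_circ :: "('o, 'm) matrix \<Rightarrow> bool" where
  "R_assoc_circ R \<longleftrightarrow>
     (\<forall>a b c d x y.
       bm (asc Mo (To a) (To c) (To x)) (asc Mo (To b) (To d) (To y))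
         \<cdot> bm (om (om (mu T a) (mu T c)) (Id (To x))) (om (om (mu T b) (mu T d)) (Id (To y)))
         \<cdot> bm (om (To2 (To a) (To c)) (Id (To x))) (om (To2 (To b) (To d)) (Id (To y)))
         \<cdot> R (oo (To a) (To c)) (oo (To b) (To d)) x y \<cdot> om (R a b c d) (Id (bo x y))
       = bm (om (Id (To a)) (om (mu T c) (mu T x))) (om (Id (To b)) (om (mu T d) (mu T y)))
         \<cdot> bm (om (Id (To a)) (To2 (To c) (To x))) (om (Id (To b)) (To2 (To d) (To y)))
         \<cdot> R a b (oo (To c) (To x)) (oo (To d) (To y)) \<cdot> om (Id (bo a b)) (R c d x y)
         \<cdot> asc Mo (bo a b) (bo c d) (bo x y))"

definition R_assoc_bullet :: "('o, 'm) matrix \<Rightarrow> bool" where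
  "R_assoc_bullet R \<longleftrightarrow>
     (\<forall>x a c y b d.
       asc Mb (oo (To x) (To y)) (oo (To a) (To b)) (oo (To c) (To d))
         \<cdot> bm (bm (om (mu T x) (mu T y)) (om (mu T a) (mu T b))) (Id (oo (To c) (To d)))
         \<cdot> bm (R (To x) (To a) (To y) (To b)) (Id (oo (To c) (To d)))
         \<cdot> bm (om (Tb2 x a) (Tb2 y b)) (Id (oo (To c) (To d)))
         \<cdot> R (bo x a) c (bo y b) d
       = bm (Id (oo (To x) (To y))) (bm (om (mu T a) (mu T b)) (om (mu T c) (mu T d)))
         \<cdot> bm (Id (oo (To x) (To y))) (R (To a) (To c) (To b) (To d))
         \<cdot> bm (Id (oo (To x) (To y))) (om (Tb2 a c) (Tb2 b d))
         \<cdot> R x (bo a c) y (bo b d)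
         \<cdot> om (asc Mb x a c) (asc Mb y b d))"

lemma duoidal_EM_iff: "duoidal_EM xi nu varpi iota \<longleftrightarrow> unit_data nu varpi iota \<and>
    xi_alg_hom xi \<and> xi_natural xi \<and> xi_assoc_circ xi \<and> xi_assoc_bullet xi \<and> xi_unital xi nu varpi"
  unfolding duoidal_EM_def xi_alg_hom_def xi_natural_def xi_assoc_circ_def xi_assoc_bullet_def xi_unital_def ..

lemma rmatrix_iff: "rmatrix R nu varpi iota \<longleftrightarrow> unit_data nu varpi iota \<and>
    (\<forall>a b c d. R a b c d \<in> Hom (oo (bo a b) (bo c d)) (bo (oo (To a) (To c)) (oo (To b) (To d)))) \<and>
    R_natural R \<and> R_unital R nu varpi \<and> R_lift R \<and> R_assoc_circ R \<and> R_assoc_bullet R"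
  unfolding rmatrix_def R_natural_def R_unital_def R_lift_def R_assoc_circ_def R_assoc_bullet_def ..

end

locale sep_opmonoidal_laws = duo_ctx C Mo Mb T To2 To0 Tb2 Tb0
  for C :: "('o,'m) cat" and Mo Mb T To2 To0 Tb2 Tb0 +
  assumes preduoidal: preduoidal
    and sep_opmonoidal: sep_opmonoidal_monad

sublocale sep_opmonoidal_laws \<subseteq> monad_laws C T
  using preduoidal sep_opmonoidal
  by unfold_locales (simp_all add: preduoidal_def sep_opmonoidal_monad_def)

sublocale sep_opmonoidal_laws \<subseteq> O: bimonad_laws C Mo T To2 To0
  using preduoidal sep_opmonoidal
  by unfold_locales (simp_all add: preduoidal_def sep_opmonoidal_monad_def)

sublocale sep_opmonoidal_laws \<subseteq> B: bimonad_laws C Mb T Tb2 Tb0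
  using preduoidal sep_opmonoidal
  by unfold_locales (simp_all add: preduoidal_def sep_opmonoidal_monad_def)

context sep_opmonoidal_laws
begin

lemma unit_data_simps:
  assumes "unit_data nu varpi iota"
  shows "nu \<in> arr C" "dm C nu = bot" "cd C nu = bo bot bot"
    "varpi \<in> arr C" "dm C varpi = oo one one" "cd C varpi = one"
    "iota \<in> arr C" "dm C iota = bot" "cd C iota = one"
  using assms unfolding unit_data_def alg_hom_iff by auto

lemma lift_lift_free_Tar_eta:
  "snd (liftO (liftB (free a) (free b)) (liftB (free c) (free d)))
      \<cdot> Tm (om (bm (eta T a) (eta T b)) (bm (eta T c) (eta T d)))
    = om (Tb2 a b) (Tb2 c d) \<cdot> To2 (bo a b) (bo c d)"
proof -
  have "To2 (bo (To a) (To b)) (bo (To c) (To d)) \<cdot> Tm (om (bm (eta T a) (eta T b)) (bm (eta T c) (eta T d)))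
      = om (Tm (bm (eta T a) (eta T b))) (Tm (bm (eta T c) (eta T d))) \<cdot> To2 (bo a b) (bo c d)"
    using O.T2_nat[of "bm (eta T a) (eta T b)" "bm (eta T c) (eta T d)"] by simp
  then show ?thesis
    using B.lift_free_Tar_eta[of a b] B.lift_free_Tar_eta[of c d] by (simp add: O.tarr_merge)
qed

end

section \<open>Interchange laws and R-matrices determining each other\<close>

locale interchange_correspondence = sep_opmonoidal_laws C Mo Mb T To2 To0 Tb2 Tb0
  for C :: "('o,'m) cat" and Mo Mb T To2 To0 Tb2 Tb0 +
  fixes xi :: "('o, 'm) interchange"
    and R :: "('o, 'm) matrix"
  assumes R_in_Hom: "R a b c d \<in> Hom (oo (bo a b) (bo c d)) (bo (oo (To a) (To c)) (oo (To b) (To d)))"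
    and xi_in_Hom: "is_alg T X \<Longrightarrow> is_alg T Y \<Longrightarrow> is_alg T A \<Longrightarrow> is_alg T B \<Longrightarrow>
      xi X Y A B \<in> Hom (oo (bo (fst X) (fst Y)) (bo (fst A) (fst B)))
        (bo (oo (fst X) (fst A)) (oo (fst Y) (fst B)))"
    and xi_comp_tensor: "is_alg T X \<Longrightarrow> is_alg T Y \<Longrightarrow> is_alg T A \<Longrightarrow> is_alg T B \<Longrightarrow>
      f \<in> arr C \<Longrightarrow> g \<in> arr C \<Longrightarrow> h \<in> arr C \<Longrightarrow> k \<in> arr C \<Longrightarrow>
      cd C f = fst X \<Longrightarrow> cd C g = fst Y \<Longrightarrow> cd C h = fst A \<Longrightarrow> cd C k = fst B \<Longrightarrow>
      xi X Y A B \<cdot> om (bm f g) (bm h k)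
        = bm (om (snd X \<cdot> Tm f) (snd A \<cdot> Tm h)) (om (snd Y \<cdot> Tm g) (snd B \<cdot> Tm k))
          \<cdot> R (dm C f) (dm C g) (dm C h) (dm C k)"
begin

lemma R_simps [simp]: "R a b c d \<in> arr C" "dm C (R a b c d) = oo (bo a b) (bo c d)"
  "cd C (R a b c d) = bo (oo (To a) (To c)) (oo (To b) (To d))"
  using R_in_Hom[of a b c d] by (simp_all add: Hom_iff)

lemma xi_simps [simp]:
  assumes "is_alg T X" "is_alg T Y" "is_alg T A" "is_alg T B"
  shows "xi X Y A B \<in> arr C" "dm C (xi X Y A B) = oo (bo (fst X) (fst Y)) (bo (fst A) (fst B))"
    "cd C (xi X Y A B) = bo (oo (fst X) (fst A)) (oo (fst Y) (fst B))"
  using xi_in_Hom[OF assms] by (simp_all add: Hom_iff)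

lemma xi_free_comp_eta:
  "xi (free a) (free b) (free c) (free d) \<cdot> om (bm (eta T a) (eta T b)) (bm (eta T c) (eta T d))
    = R a b c d"
  using xi_comp_tensor[of "free a" "free b" "free c" "free d" "eta T a" "eta T b" "eta T c" "eta T d"]
  by simp

lemma R_of_eq: "R_of xi a b c d = R a b c d"
  unfolding R_of_def by (rule xi_free_comp_eta)

lemma xi_of_eq:
  assumes "is_alg T X" "is_alg T Y" "is_alg T A" "is_alg T B"
  shows "xi_of R X Y A B = xi X Y A B"
  using xi_comp_tensor[OF assms, of "Id (fst X)" "Id (fst Y)" "Id (fst A)" "Id (fst B)"] assms
  by (simp add: xi_of_def)

lemma xi_free_eq:
  "bm (om (mu T a) (mu T c)) (om (mu T b) (mu T d)) \<cdot> R (To a) (To b) (To c) (To d)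
    = xi (free a) (free b) (free c) (free d)"
  using xi_of_eq[of "free a" "free b" "free c" "free d"] by (simp add: xi_of_def)

lemma R_nat:
  assumes "f \<in> arr C" "g \<in> arr C" "h \<in> arr C" "k \<in> arr C"
  shows "R (cd C f) (cd C g) (cd C h) (cd C k) \<cdot> om (bm f g) (bm h k)
    = bm (om (Tm f) (Tm h)) (om (Tm g) (Tm k)) \<cdot> R (dm C f) (dm C g) (dm C h) (dm C k)"
proof -
  have "R (cd C f) (cd C g) (cd C h) (cd C k) \<cdot> om (bm f g) (bm h k)
      = xi (free (cd C f)) (free (cd C g)) (free (cd C h)) (free (cd C k))
        \<cdot> om (bm (eta T (cd C f) \<cdot> f) (eta T (cd C g) \<cdot> g)) (bm (eta T (cd C h) \<cdot> h) (eta T (cd C k) \<cdot> k))"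
    using assms by (simp add: xi_free_comp_eta[symmetric] O.tarr_merge B.tarr_merge)
  also have "\<dots> = bm (om (Tm f) (Tm h)) (om (Tm g) (Tm k)) \<cdot> R (dm C f) (dm C g) (dm C h) (dm C k)"
    using assms xi_comp_tensor[of "free (cd C f)" "free (cd C g)" "free (cd C h)" "free (cd C k)"
        "eta T (cd C f) \<cdot> f" "eta T (cd C g) \<cdot> g" "eta T (cd C h) \<cdot> h" "eta T (cd C k) \<cdot> k"]
    by simp
  finally show ?thesis .
qed

lemma xi_nat:
  assumes f: "alg_hom T X X' f" and g: "alg_hom T Y Y' g"
    and h: "alg_hom T A A' h" and k: "alg_hom T B B' k"
  shows "xi X' Y' A' B' \<cdot> om (bm f g) (bm h k) = bm (om f h) (om g k) \<cdot> xi X Y A B"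
proof -
  have [simp]: "is_alg T X" "is_alg T Y" "is_alg T A" "is_alg T B"
    "is_alg T X'" "is_alg T Y'" "is_alg T A'" "is_alg T B'"
    "f \<in> arr C" "dm C f = fst X" "cd C f = fst X'" "g \<in> arr C" "dm C g = fst Y" "cd C g = fst Y'"
    "h \<in> arr C" "dm C h = fst A" "cd C h = fst A'" "k \<in> arr C" "dm C k = fst B" "cd C k = fst B'"
    and homs: "snd X' \<cdot> Tm f = f \<cdot> snd X" "snd Y' \<cdot> Tm g = g \<cdot> snd Y"
      "snd A' \<cdot> Tm h = h \<cdot> snd A" "snd B' \<cdot> Tm k = k \<cdot> snd B"
    using f g h k unfolding alg_hom_iff by auto
  have "xi X' Y' A' B' \<cdot> om (bm f g) (bm h k)
      = bm (om (f \<cdot> snd X) (h \<cdot> snd A)) (om (g \<cdot> snd Y) (k \<cdot> snd B)) \<cdot> R (fst X) (fst Y) (fst A) (fst B)"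
    using xi_comp_tensor[of X' Y' A' B' f g h k] by (simp add: homs)
  also have "\<dots> = bm (om f h) (om g k) \<cdot> xi_of R X Y A B"
    by (simp add: xi_of_def O.tarr_merge B.tarr_merge)
  finally show ?thesis
    by (simp add: xi_of_eq)
qed

lemma alg_hom_xi_if_R_lift:
  assumes R_lift: "R_lift R"
    and X: "is_alg T X" and Y: "is_alg T Y" and A: "is_alg T A" and B: "is_alg T B"
  shows "alg_hom T (liftO (liftB X Y) (liftB A B)) (liftB (liftO X A) (liftO Y B)) (xi X Y A B)"
proof -
  let ?x = "fst X" and ?y = "fst Y" and ?a = "fst A" and ?b = "fst B"
  let ?S = "bm (om (snd X) (snd A)) (om (snd Y) (snd B))"
  have split: "om (bm (snd X) (snd Y) \<cdot> Tb2 ?x ?y) (bm (snd A) (snd B) \<cdot> Tb2 ?a ?b)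
      = om (bm (snd X) (snd Y)) (bm (snd A) (snd B)) \<cdot> om (Tb2 ?x ?y) (Tb2 ?a ?b)"
    using X Y A B by (simp add: O.tarr_comp)
  have "xi X Y A B \<cdot> snd (liftO (liftB X Y) (liftB A B))
      = (xi X Y A B \<cdot> om (bm (snd X) (snd Y)) (bm (snd A) (snd B)))
        \<cdot> om (Tb2 ?x ?y) (Tb2 ?a ?b) \<cdot> To2 (bo ?x ?y) (bo ?a ?b)"
    using X Y A B by (simp add: split)
  also have "\<dots> = ?S \<cdot> bm (om (mu T ?x) (mu T ?a)) (om (mu T ?y) (mu T ?b)) \<cdot> R (To ?x) (To ?y) (To ?a) (To ?b)
        \<cdot> om (Tb2 ?x ?y) (Tb2 ?a ?b) \<cdot> To2 (bo ?x ?y) (bo ?a ?b)"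
    using X Y A B xi_comp_tensor[OF X Y A B, of "snd X" "snd Y" "snd A" "snd B"]
    by (simp add: is_alg_mult O.tarr_merge B.tarr_merge)
  also have "\<dots> = ?S \<cdot> bm (om (mu T ?x) (mu T ?a)) (om (mu T ?y) (mu T ?b))
        \<cdot> bm (To2 (To ?x) (To ?a)) (To2 (To ?y) (To ?b)) \<cdot> Tb2 (oo (To ?x) (To ?a)) (oo (To ?y) (To ?b))
        \<cdot> Tm (R ?x ?y ?a ?b)"
    using R_lift unfolding R_lift_def by simp
  also have "\<dots> = bm (om (snd X) (snd A) \<cdot> To2 ?x ?a \<cdot> Tm (om (snd X) (snd A)))
        (om (snd Y) (snd B) \<cdot> To2 ?y ?b \<cdot> Tm (om (snd Y) (snd B)))
        \<cdot> Tb2 (oo (To ?x) (To ?a)) (oo (To ?y) (To ?b)) \<cdot> Tm (R ?x ?y ?a ?b)"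
    using X Y A B O.lift_Tar_tarr_struct[OF X A] O.lift_Tar_tarr_struct[OF Y B]
    by (simp add: B.tarr_merge)
  also have "\<dots> = snd (liftB (liftO X A) (liftO Y B)) \<cdot> Tm ?S \<cdot> Tm (R ?x ?y ?a ?b)"
  proof -
    have nat: "Tb2 (oo ?x ?a) (oo ?y ?b) \<cdot> Tm ?S
        = bm (Tm (om (snd X) (snd A))) (Tm (om (snd Y) (snd B))) \<cdot> Tb2 (oo (To ?x) (To ?a)) (oo (To ?y) (To ?b))"
      using X Y A B B.T2_nat[of "om (snd X) (snd A)" "om (snd Y) (snd B)"] by simp
    show ?thesis
      using X Y A B comp_eq_comp_right[OF nat, where e = "Tm (R ?x ?y ?a ?b)"] by (simp add: B.tarr_merge)
  qed
  also have "\<dots> = snd (liftB (liftO X A) (liftO Y B)) \<cdot> Tm (xi X Y A B)"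
    using X Y A B by (simp add: xi_of_eq[OF X Y A B, symmetric] xi_of_def)
  finally show ?thesis
    using X Y A B unfolding alg_hom_iff by simp
qed

lemma R_lift_eq_if_xi_alg_hom:
  assumes "xi_alg_hom xi"
  shows "bm (om (mu T a) (mu T c)) (om (mu T b) (mu T d)) \<cdot> R (To a) (To b) (To c) (To d)
        \<cdot> om (Tb2 a b) (Tb2 c d) \<cdot> To2 (bo a b) (bo c d)
      = bm (om (mu T a) (mu T c)) (om (mu T b) (mu T d))
        \<cdot> bm (To2 (To a) (To c)) (To2 (To b) (To d)) \<cdot> Tb2 (oo (To a) (To c)) (oo (To b) (To d))
        \<cdot> Tm (R a b c d)"
proof -
  let ?xi = "xi (free a) (free b) (free c) (free d)"
  let ?eta = "om (bm (eta T a) (eta T b)) (bm (eta T c) (eta T d))"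
  let ?dom = "liftO (liftB (free a) (free b)) (liftB (free c) (free d))"
  let ?cod = "liftB (liftO (free a) (free c)) (liftO (free b) (free d))"
  have "alg_hom T ?dom ?cod ?xi"
    using assms is_alg_free unfolding xi_alg_hom_def by blast
  then have hom_eq: "?xi \<cdot> snd ?dom = snd ?cod \<cdot> Tm ?xi"
    unfolding alg_hom_iff by simp
  have "bm (om (mu T a) (mu T c)) (om (mu T b) (mu T d)) \<cdot> R (To a) (To b) (To c) (To d)
        \<cdot> om (Tb2 a b) (Tb2 c d) \<cdot> To2 (bo a b) (bo c d)
      = ?xi \<cdot> snd ?dom \<cdot> Tm ?eta"
    using comp_eq_comp_right[OF xi_free_eq] lift_lift_free_Tar_eta[of a b c d] by simp
  also have "\<dots> = snd ?cod \<cdot> Tm ?xi \<cdot> Tm ?eta"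
    using comp_eq_comp_right[OF hom_eq, where e = "Tm ?eta"] by simp
  also have "\<dots> = snd ?cod \<cdot> Tm (R a b c d)"
    by (simp add: xi_free_comp_eta[symmetric])
  finally show ?thesis
    by (simp add: B.tarr_merge)
qed

lemma R_assoc_circ_eq_if_xi_assoc_circ:
  assumes "xi_assoc_circ xi"
  shows "bm (asc Mo (To a) (To c) (To x)) (asc Mo (To b) (To d) (To y))
      \<cdot> bm (om (om (mu T a) (mu T c)) (Id (To x))) (om (om (mu T b) (mu T d)) (Id (To y)))
      \<cdot> bm (om (To2 (To a) (To c)) (Id (To x))) (om (To2 (To b) (To d)) (Id (To y)))
      \<cdot> R (oo (To a) (To c)) (oo (To b) (To d)) x y \<cdot> om (R a b c d) (Id (bo x y))
    = bm (om (Id (To a)) (om (mu T c) (mu T x))) (om (Id (To b)) (om (mu T d) (mu T y)))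
      \<cdot> bm (om (Id (To a)) (To2 (To c) (To x))) (om (Id (To b)) (To2 (To d) (To y)))
      \<cdot> R a b (oo (To c) (To x)) (oo (To d) (To y)) \<cdot> om (Id (bo a b)) (R c d x y)
      \<cdot> asc Mo (bo a b) (bo c d) (bo x y)"
proof -
  let ?asc = "bm (asc Mo (To a) (To c) (To x)) (asc Mo (To b) (To d) (To y))"
  let ?mu_l = "bm (om (om (mu T a) (mu T c)) (Id (To x))) (om (om (mu T b) (mu T d)) (Id (To y)))"
  let ?T2_l = "bm (om (To2 (To a) (To c)) (Id (To x))) (om (To2 (To b) (To d)) (Id (To y)))"
  let ?mu_r = "bm (om (Id (To a)) (om (mu T c) (mu T x))) (om (Id (To b)) (om (mu T d) (mu T y)))"
  let ?T2_r = "bm (om (Id (To a)) (To2 (To c) (To x))) (om (Id (To b)) (To2 (To d) (To y)))"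
  let ?eta = "\<lambda>a b c d. om (bm (eta T a) (eta T b)) (bm (eta T c) (eta T d))"
  let ?xi_l = "xi (liftO (free a) (free c)) (liftO (free b) (free d)) (free x) (free y)"
  let ?xi_r = "xi (free a) (free b) (liftO (free c) (free x)) (liftO (free d) (free y))"
  have A1: "?asc \<cdot> ?xi_l \<cdot> om (xi (free a) (free b) (free c) (free d)) (Id (bo (To x) (To y)))
    = ?xi_r \<cdot> om (Id (bo (To a) (To b))) (xi (free c) (free d) (free x) (free y))
      \<cdot> asc Mo (bo (To a) (To b)) (bo (To c) (To d)) (bo (To x) (To y))"
    using assms[unfolded xi_assoc_circ_def, rule_format, where X = "free a" and Y = "free b"
        and A = "free c" and B = "free d" and Cc = "free x" and D = "free y"]
    by simp
  have left: "?mu_l \<cdot> ?T2_l \<cdot> R (oo (To a) (To c)) (oo (To b) (To d)) x y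
    = ?xi_l \<cdot> om (Id (bo (oo (To a) (To c)) (oo (To b) (To d)))) (bm (eta T x) (eta T y))"
    using xi_comp_tensor[of "liftO (free a) (free c)" "liftO (free b) (free d)" "free x" "free y"
        "Id (oo (To a) (To c))" "Id (oo (To b) (To d))" "eta T x" "eta T y"]
    by (simp add: O.tarr_merge B.tarr_merge)
  have right: "?mu_r \<cdot> ?T2_r \<cdot> R a b (oo (To c) (To x)) (oo (To d) (To y))
    = ?xi_r \<cdot> om (bm (eta T a) (eta T b)) (Id (bo (oo (To c) (To x)) (oo (To d) (To y))))"
    using xi_comp_tensor[of "free a" "free b" "liftO (free c) (free x)" "liftO (free d) (free y)"
        "eta T a" "eta T b" "Id (oo (To c) (To x))" "Id (oo (To d) (To y))"]
    by (simp add: O.tarr_merge B.tarr_merge)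
  have "?asc \<cdot> ?mu_l \<cdot> ?T2_l \<cdot> R (oo (To a) (To c)) (oo (To b) (To d)) x y \<cdot> om (R a b c d) (Id (bo x y))
      = ?asc \<cdot> ?xi_l \<cdot> om (xi (free a) (free b) (free c) (free d)) (Id (bo (To x) (To y)))
        \<cdot> om (?eta a b c d) (bm (eta T x) (eta T y))"
    using comp_eq_comp_right[OF left, where e = "om (R a b c d) (Id (bo x y))"]
    by (simp add: O.tarr_merge xi_free_comp_eta)
  also have "\<dots> = ?xi_r \<cdot> om (Id (bo (To a) (To b))) (xi (free c) (free d) (free x) (free y))
      \<cdot> om (bm (eta T a) (eta T b)) (?eta c d x y) \<cdot> asc Mo (bo a b) (bo c d) (bo x y)"
    using comp_eq_comp_right[OF A1, where e = "om (?eta a b c d) (bm (eta T x) (eta T y))"]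
      O.asc_nat[of "bm (eta T a) (eta T b)" "bm (eta T c) (eta T d)" "bm (eta T x) (eta T y)"]
    by simp
  also have "\<dots> = ?mu_r \<cdot> ?T2_r \<cdot> R a b (oo (To c) (To x)) (oo (To d) (To y))
      \<cdot> om (Id (bo a b)) (R c d x y) \<cdot> asc Mo (bo a b) (bo c d) (bo x y)"
    using comp_eq_comp_right[OF right,
        where e = "om (Id (bo a b)) (R c d x y) \<cdot> asc Mo (bo a b) (bo c d) (bo x y)"]
    by (simp add: O.tarr_merge xi_free_comp_eta)
  finally show ?thesis .
qed

lemma xi_assoc_circ_eq_if_R_assoc_circ:
  assumes R1: "R_assoc_circ R"
    and X: "is_alg T X" and Y: "is_alg T Y" and A: "is_alg T A" and B: "is_alg T B"
    and Cc: "is_alg T Cc" and D: "is_alg T D"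
  shows "bm (asc Mo (fst X) (fst A) (fst Cc)) (asc Mo (fst Y) (fst B) (fst D))
      \<cdot> xi (liftO X A) (liftO Y B) Cc D \<cdot> om (xi X Y A B) (Id (bo (fst Cc) (fst D)))
    = xi X Y (liftO A Cc) (liftO B D) \<cdot> om (Id (bo (fst X) (fst Y))) (xi A B Cc D)
      \<cdot> asc Mo (bo (fst X) (fst Y)) (bo (fst A) (fst B)) (bo (fst Cc) (fst D))"
proof -
  let ?x = "fst X" and ?y = "fst Y" and ?a = "fst A" and ?b = "fst B" and ?c = "fst Cc" and ?d = "fst D"
  let ?P = "bm (om (snd X) (om (snd A) (snd Cc))) (om (snd Y) (om (snd B) (snd D)))"
  let ?asc = "bm (asc Mo ?x ?a ?c) (asc Mo ?y ?b ?d)"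
  let ?tail = "om (R ?x ?y ?a ?b) (Id (bo ?c ?d))"
  let ?R_l = "R (oo (To ?x) (To ?a)) (oo (To ?y) (To ?b)) ?c ?d"
  have "?asc \<cdot> xi (liftO X A) (liftO Y B) Cc D \<cdot> om (xi X Y A B) (Id (bo ?c ?d))
    = ?asc \<cdot> xi (liftO X A) (liftO Y B) Cc D \<cdot> om (bm (om (snd X) (snd A)) (om (snd Y) (snd B))) (Id (bo ?c ?d))
      \<cdot> ?tail"
    using X Y A B Cc D by (simp add: xi_of_eq[symmetric] xi_of_def O.tarr_merge)
  also have "\<dots> = ?asc \<cdot> bm (om (snd (liftO X A) \<cdot> Tm (om (snd X) (snd A))) (snd Cc \<cdot> Tm (Id ?c)))
      (om (snd (liftO Y B) \<cdot> Tm (om (snd Y) (snd B))) (snd D \<cdot> Tm (Id ?d))) \<cdot> ?R_l \<cdot> ?tail"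
    using X Y A B Cc D comp_eq_comp_right[OF xi_comp_tensor[of "liftO X A" "liftO Y B" Cc D
        "om (snd X) (snd A)" "om (snd Y) (snd B)" "Id ?c" "Id ?d"], where e = ?tail]
    by simp
  also have "\<dots> = ?P \<cdot> bm (asc Mo (To ?x) (To ?a) (To ?c)) (asc Mo (To ?y) (To ?b) (To ?d))
      \<cdot> bm (om (om (mu T ?x) (mu T ?a)) (Id (To ?c))) (om (om (mu T ?y) (mu T ?b)) (Id (To ?d)))
      \<cdot> bm (om (To2 (To ?x) (To ?a)) (Id (To ?c))) (om (To2 (To ?y) (To ?b)) (Id (To ?d))) \<cdot> ?R_l \<cdot> ?tail"
    using X Y A B Cc D O.asc_comp_tarr_lift_struct[OF X A Cc] O.asc_comp_tarr_lift_struct[OF Y B D]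
    by (simp add: O.tarr_merge B.tarr_merge)
  also have "\<dots> = ?P \<cdot> bm (om (Id (To ?x)) (om (mu T ?a) (mu T ?c))) (om (Id (To ?y)) (om (mu T ?b) (mu T ?d)))
      \<cdot> bm (om (Id (To ?x)) (To2 (To ?a) (To ?c))) (om (Id (To ?y)) (To2 (To ?b) (To ?d)))
      \<cdot> R ?x ?y (oo (To ?a) (To ?c)) (oo (To ?b) (To ?d))
      \<cdot> om (Id (bo ?x ?y)) (R ?a ?b ?c ?d) \<cdot> asc Mo (bo ?x ?y) (bo ?a ?b) (bo ?c ?d)"
    using R1 unfolding R_assoc_circ_def by (simp only:)
  also have "\<dots> = (xi X Y (liftO A Cc) (liftO B D) \<cdot> om (Id (bo ?x ?y)) (bm (om (snd A) (snd Cc)) (om (snd B) (snd D))))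
      \<cdot> om (Id (bo ?x ?y)) (R ?a ?b ?c ?d) \<cdot> asc Mo (bo ?x ?y) (bo ?a ?b) (bo ?c ?d)"
    using X Y A B Cc D O.tarr_lift_struct[OF X A Cc] O.tarr_lift_struct[OF Y B D]
      xi_comp_tensor[of X Y "liftO A Cc" "liftO B D" "Id ?x" "Id ?y" "om (snd A) (snd Cc)" "om (snd B) (snd D)"]
    by (simp add: O.tarr_merge B.tarr_merge)
  finally show ?thesis
    using X Y A B Cc D by (simp add: xi_of_eq[symmetric] xi_of_def O.tarr_merge)
qed

lemma R_assoc_bullet_eq_if_xi_assoc_bullet:
  assumes "xi_assoc_bullet xi"
  shows "asc Mb (oo (To x) (To y)) (oo (To a) (To b)) (oo (To c) (To d))
      \<cdot> bm (bm (om (mu T x) (mu T y)) (om (mu T a) (mu T b))) (Id (oo (To c) (To d)))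
      \<cdot> bm (R (To x) (To a) (To y) (To b)) (Id (oo (To c) (To d)))
      \<cdot> bm (om (Tb2 x a) (Tb2 y b)) (Id (oo (To c) (To d)))
      \<cdot> R (bo x a) c (bo y b) d
    = bm (Id (oo (To x) (To y))) (bm (om (mu T a) (mu T b)) (om (mu T c) (mu T d)))
      \<cdot> bm (Id (oo (To x) (To y))) (R (To a) (To c) (To b) (To d))
      \<cdot> bm (Id (oo (To x) (To y))) (om (Tb2 a c) (Tb2 b d))
      \<cdot> R x (bo a c) y (bo b d)
      \<cdot> om (asc Mb x a c) (asc Mb y b d)"
proof -
  let ?asc = "asc Mb (oo (To x) (To y)) (oo (To a) (To b)) (oo (To c) (To d))"
  let ?I_l = "Id (oo (To c) (To d))" and ?I_r = "Id (oo (To x) (To y))"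
  let ?xi_l = "xi (liftB (free x) (free a)) (free c) (liftB (free y) (free b)) (free d)"
  let ?xi_r = "xi (free x) (liftB (free a) (free c)) (free y) (liftB (free b) (free d))"
  let ?eta_l = "om (bm (bm (eta T x) (eta T a)) (eta T c)) (bm (bm (eta T y) (eta T b)) (eta T d))"
  let ?eta_r = "om (bm (eta T x) (bm (eta T a) (eta T c))) (bm (eta T y) (bm (eta T b) (eta T d)))"
  have A2: "?asc \<cdot> bm (xi (free x) (free a) (free y) (free b)) ?I_l \<cdot> ?xi_l
    = bm ?I_r (xi (free a) (free c) (free b) (free d)) \<cdot> ?xi_r
      \<cdot> om (asc Mb (To x) (To a) (To c)) (asc Mb (To y) (To b) (To d))"
    using assms[unfolded xi_assoc_bullet_def, rule_format, where X = "free x" and A = "free a"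
        and Cc = "free c" and Y = "free y" and B = "free b" and D = "free d"]
    by simp
  have left: "bm (om (Tb2 x a) (Tb2 y b)) ?I_l \<cdot> R (bo x a) c (bo y b) d = ?xi_l \<cdot> ?eta_l"
    using xi_comp_tensor[of "liftB (free x) (free a)" "free c" "liftB (free y) (free b)" "free d"
        "bm (eta T x) (eta T a)" "eta T c" "bm (eta T y) (eta T b)" "eta T d"]
      B.lift_free_Tar_eta[of x a] B.lift_free_Tar_eta[of y b]
    by simp
  have right: "bm ?I_r (om (Tb2 a c) (Tb2 b d)) \<cdot> R x (bo a c) y (bo b d) = ?xi_r \<cdot> ?eta_r"
    using xi_comp_tensor[of "free x" "liftB (free a) (free c)" "free y" "liftB (free b) (free d)"
        "eta T x" "bm (eta T a) (eta T c)" "eta T y" "bm (eta T b) (eta T d)"]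
      B.lift_free_Tar_eta[of a c] B.lift_free_Tar_eta[of b d]
    by simp
  have mu_R_r: "bm ?I_r (bm (om (mu T a) (mu T b)) (om (mu T c) (mu T d)))
      \<cdot> bm ?I_r (R (To a) (To c) (To b) (To d)) = bm ?I_r (xi (free a) (free c) (free b) (free d))"
    by (simp add: B.tarr_merge xi_free_eq)
  have "?asc \<cdot> bm (bm (om (mu T x) (mu T y)) (om (mu T a) (mu T b))) ?I_l
      \<cdot> bm (R (To x) (To a) (To y) (To b)) ?I_l \<cdot> bm (om (Tb2 x a) (Tb2 y b)) ?I_l
      \<cdot> R (bo x a) c (bo y b) d
    = ?asc \<cdot> bm (xi (free x) (free a) (free y) (free b)) ?I_l \<cdot> ?xi_l \<cdot> ?eta_l"
    by (simp add: left B.tarr_merge xi_free_eq)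
  also have "\<dots> = bm ?I_r (xi (free a) (free c) (free b) (free d)) \<cdot> ?xi_r \<cdot> ?eta_r
      \<cdot> om (asc Mb x a c) (asc Mb y b d)"
    using comp_eq_comp_right[OF A2, where e = ?eta_l]
      B.asc_nat[of "eta T x" "eta T a" "eta T c"] B.asc_nat[of "eta T y" "eta T b" "eta T d"]
    by (simp add: O.tarr_merge)
  also have "\<dots> = bm ?I_r (bm (om (mu T a) (mu T b)) (om (mu T c) (mu T d)))
      \<cdot> bm ?I_r (R (To a) (To c) (To b) (To d)) \<cdot> bm ?I_r (om (Tb2 a c) (Tb2 b d))
      \<cdot> R x (bo a c) y (bo b d) \<cdot> om (asc Mb x a c) (asc Mb y b d)"
    using comp_eq_comp_right[OF mu_R_r]
      comp_eq_comp_right[OF right, where e = "om (asc Mb x a c) (asc Mb y b d)"] by simp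
  finally show ?thesis .
qed

lemma xi_assoc_bullet_eq_if_R_assoc_bullet:
  assumes R2: "R_assoc_bullet R"
    and X: "is_alg T X" and A: "is_alg T A" and Cc: "is_alg T Cc"
    and Y: "is_alg T Y" and B: "is_alg T B" and D: "is_alg T D"
  shows "asc Mb (oo (fst X) (fst Y)) (oo (fst A) (fst B)) (oo (fst Cc) (fst D))
      \<cdot> bm (xi X A Y B) (Id (oo (fst Cc) (fst D))) \<cdot> xi (liftB X A) Cc (liftB Y B) D
    = bm (Id (oo (fst X) (fst Y))) (xi A Cc B D) \<cdot> xi X (liftB A Cc) Y (liftB B D)
      \<cdot> om (asc Mb (fst X) (fst A) (fst Cc)) (asc Mb (fst Y) (fst B) (fst D))"
proof -
  let ?x = "fst X" and ?a = "fst A" and ?c = "fst Cc" and ?y = "fst Y" and ?b = "fst B" and ?d = "fst D"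
  let ?P = "bm (om (snd X) (snd Y)) (bm (om (snd A) (snd B)) (om (snd Cc) (snd D)))"
  let ?asc = "asc Mb (oo ?x ?y) (oo ?a ?b) (oo ?c ?d)"
  let ?core = "bm (om (mu T ?x) (mu T ?y)) (om (mu T ?a) (mu T ?b)) \<cdot> R (To ?x) (To ?a) (To ?y) (To ?b)
    \<cdot> om (Tb2 ?x ?a) (Tb2 ?y ?b)"
  let ?R_l = "R (bo ?x ?a) ?c (bo ?y ?b) ?d"
  let ?I_r = "Id (oo (To ?x) (To ?y))"
  have "?asc \<cdot> bm (xi X A Y B) (Id (oo ?c ?d)) \<cdot> xi (liftB X A) Cc (liftB Y B) D
    = ?asc \<cdot> bm ((xi X A Y B \<cdot> om (bm (snd X) (snd A)) (bm (snd Y) (snd B))) \<cdot> om (Tb2 ?x ?a) (Tb2 ?y ?b))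
        (om (snd Cc) (snd D)) \<cdot> ?R_l"
    using X A Cc Y B D
    by (simp add: xi_of_eq[of "liftB X A" Cc "liftB Y B" D, symmetric] xi_of_def O.tarr_merge B.tarr_merge)
  also have "\<dots> = ?asc \<cdot> bm (bm (om (snd X) (snd Y)) (om (snd A) (snd B))) (om (snd Cc) (snd D))
      \<cdot> bm ?core (Id (oo (To ?c) (To ?d))) \<cdot> ?R_l"
    using X A Cc Y B D xi_comp_tensor[OF X A Y B, of "snd X" "snd A" "snd Y" "snd B"]
    by (simp add: is_alg_mult O.tarr_merge B.tarr_merge)
  also have "\<dots> = ?P \<cdot> asc Mb (oo (To ?x) (To ?y)) (oo (To ?a) (To ?b)) (oo (To ?c) (To ?d))
      \<cdot> bm ?core (Id (oo (To ?c) (To ?d))) \<cdot> ?R_l"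
    using X A Cc Y B D comp_eq_comp_right[OF B.asc_nat[of "om (snd X) (snd Y)" "om (snd A) (snd B)"
        "om (snd Cc) (snd D)"], where e = "bm ?core (Id (oo (To ?c) (To ?d))) \<cdot> ?R_l"]
    by simp
  also have "\<dots> = ?P \<cdot> bm ?I_r (bm (om (mu T ?a) (mu T ?b)) (om (mu T ?c) (mu T ?d)))
      \<cdot> bm ?I_r (R (To ?a) (To ?c) (To ?b) (To ?d)) \<cdot> bm ?I_r (om (Tb2 ?a ?c) (Tb2 ?b ?d))
      \<cdot> R ?x (bo ?a ?c) ?y (bo ?b ?d) \<cdot> om (asc Mb ?x ?a ?c) (asc Mb ?y ?b ?d)"
    using R2 unfolding R_assoc_bullet_def by (simp add: B.tarr_merge)
  also have "\<dots> = bm (om (snd X) (snd Y))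
        ((xi A Cc B D \<cdot> om (bm (snd A) (snd Cc)) (bm (snd B) (snd D))) \<cdot> om (Tb2 ?a ?c) (Tb2 ?b ?d))
      \<cdot> R ?x (bo ?a ?c) ?y (bo ?b ?d) \<cdot> om (asc Mb ?x ?a ?c) (asc Mb ?y ?b ?d)"
    using X A Cc Y B D xi_comp_tensor[OF A Cc B D, of "snd A" "snd Cc" "snd B" "snd D"]
    by (simp add: is_alg_mult O.tarr_merge B.tarr_merge)
  finally show ?thesis
    using X A Cc Y B D
    by (simp add: xi_of_eq[of X "liftB A Cc" Y "liftB B D", symmetric] xi_of_def O.tarr_merge B.tarr_merge)
qed

lemma xi_unit_eqs:
  assumes "unit_data nu varpi iota" "is_alg T A" "is_alg T B"
  shows "xi botA botA A B \<cdot> om nu (Id (bo (fst A) (fst B)))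
      = bm (om To0 (snd A)) (om To0 (snd B)) \<cdot> R bot bot (fst A) (fst B) \<cdot> om nu (Id (bo (fst A) (fst B)))"
    "xi A B botA botA \<cdot> om (Id (bo (fst A) (fst B))) nu
      = bm (om (snd A) To0) (om (snd B) To0) \<cdot> R (fst A) (fst B) bot bot \<cdot> om (Id (bo (fst A) (fst B))) nu"
    "xi oneA A oneA B = bm (om Tb0 Tb0) (om (snd A) (snd B)) \<cdot> R one (fst A) one (fst B)"
    "xi A oneA B oneA = bm (om (snd A) (snd B)) (om Tb0 Tb0) \<cdot> R (fst A) one (fst B) one"
  using assms by (simp_all add: xi_of_eq[symmetric] xi_of_def unit_data_simps)

lemma R_lift_iff_xi_alg_hom: "R_lift R \<longleftrightarrow> xi_alg_hom xi"
  using alg_hom_xi_if_R_lift R_lift_eq_if_xi_alg_hom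
  unfolding xi_alg_hom_def R_lift_def by blast

lemma R_assoc_circ_iff_xi_assoc_circ: "R_assoc_circ R \<longleftrightarrow> xi_assoc_circ xi"
  using xi_assoc_circ_eq_if_R_assoc_circ R_assoc_circ_eq_if_xi_assoc_circ
  unfolding xi_assoc_circ_def R_assoc_circ_def by blast

lemma R_assoc_bullet_iff_xi_assoc_bullet: "R_assoc_bullet R \<longleftrightarrow> xi_assoc_bullet xi"
  using xi_assoc_bullet_eq_if_R_assoc_bullet R_assoc_bullet_eq_if_xi_assoc_bullet
  unfolding xi_assoc_bullet_def R_assoc_bullet_def by blast

lemma R_unital_iff_xi_unital:
  assumes "unit_data nu varpi iota"
  shows "R_unital R nu varpi \<longleftrightarrow> xi_unital xi nu varpi"
  unfolding R_unital_def xi_unital_def using assms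
  by (simp add: xi_unit_eqs del: split_paired_All)

lemma R_is_natural: "R_natural R"
  unfolding R_natural_def using R_nat by (auto simp: Hom_iff)

lemma xi_is_natural: "xi_natural xi"
  unfolding xi_natural_def using xi_nat by blast

lemma rmatrix_iff_duoidal_EM: "rmatrix R nu varpi iota \<longleftrightarrow> duoidal_EM xi nu varpi iota"
  unfolding rmatrix_iff duoidal_EM_iff
  using R_in_Hom R_is_natural xi_is_natural R_lift_iff_xi_alg_hom R_assoc_circ_iff_xi_assoc_circ
    R_assoc_bullet_iff_xi_assoc_bullet R_unital_iff_xi_unital
  by blast

end

context sep_opmonoidal_laws
begin

lemma interchange_correspondence_xi_of:
  assumes "rmatrix R nu varpi iota"
  shows "interchange_correspondence C Mo Mb T To2 To0 Tb2 Tb0 (xi_of R) R"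
proof
  show "R a b c d \<in> Hom (oo (bo a b) (bo c d)) (bo (oo (To a) (To c)) (oo (To b) (To d)))" for a b c d
    using assms unfolding rmatrix_iff by blast
  then have [simp]: "R a b c d \<in> arr C" "dm C (R a b c d) = oo (bo a b) (bo c d)"
    "cd C (R a b c d) = bo (oo (To a) (To c)) (oo (To b) (To d))" for a b c d
    by (simp_all add: Hom_iff)
  have R_nat: "R (cd C f) (cd C g) (cd C h) (cd C k) \<cdot> om (bm f g) (bm h k)
      = bm (om (Tm f) (Tm h)) (om (Tm g) (Tm k)) \<cdot> R (dm C f) (dm C g) (dm C h) (dm C k)"
    if "f \<in> arr C" "g \<in> arr C" "h \<in> arr C" "k \<in> arr C" for f g h k
    using assms that unfolding rmatrix_iff R_natural_def by (simp add: Hom_iff)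
  show "xi_of R X Y A B \<in> Hom (oo (bo (fst X) (fst Y)) (bo (fst A) (fst B)))
      (bo (oo (fst X) (fst A)) (oo (fst Y) (fst B)))"
    if "is_alg T X" "is_alg T Y" "is_alg T A" "is_alg T B" for X Y A B
    using that by (simp add: xi_of_def Hom_iff)
  show "xi_of R X Y A B \<cdot> om (bm f g) (bm h k)
      = bm (om (snd X \<cdot> Tm f) (snd A \<cdot> Tm h)) (om (snd Y \<cdot> Tm g) (snd B \<cdot> Tm k))
        \<cdot> R (dm C f) (dm C g) (dm C h) (dm C k)"
    if "is_alg T X" "is_alg T Y" "is_alg T A" "is_alg T B"
      "f \<in> arr C" "g \<in> arr C" "h \<in> arr C" "k \<in> arr C"
      "cd C f = fst X" "cd C g = fst Y" "cd C h = fst A" "cd C k = fst B" for X Y A B f g h k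
    using that R_nat[of f g h k] by (simp add: xi_of_def O.tarr_merge B.tarr_merge)
qed

lemma interchange_correspondence_R_of:
  assumes "duoidal_EM xi nu varpi iota"
  shows "interchange_correspondence C Mo Mb T To2 To0 Tb2 Tb0 xi (R_of xi)"
proof -
  have hom: "alg_hom T (liftO (liftB X Y) (liftB A B)) (liftB (liftO X A) (liftO Y B)) (xi X Y A B)"
    if "is_alg T X" "is_alg T Y" "is_alg T A" "is_alg T B" for X Y A B
    using assms that unfolding duoidal_EM_iff xi_alg_hom_def by blast
  have xi_hom: "xi X Y A B \<in> Hom (oo (bo (fst X) (fst Y)) (bo (fst A) (fst B)))
      (bo (oo (fst X) (fst A)) (oo (fst Y) (fst B)))"
    if "is_alg T X" "is_alg T Y" "is_alg T A" "is_alg T B" for X Y A B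
    using hom[OF that] unfolding alg_hom_iff by (simp add: Hom_iff)
  have nat: "xi X' Y' A' B' \<cdot> om (bm f g) (bm h k) = bm (om f h) (om g k) \<cdot> xi X Y A B"
    if "alg_hom T X X' f" "alg_hom T Y Y' g" "alg_hom T A A' h" "alg_hom T B B' k" for X X' Y Y' A A' B B' f g h k
    using assms that unfolding duoidal_EM_iff xi_natural_def by blast
  show ?thesis
  proof
    show "R_of xi a b c d \<in> Hom (oo (bo a b) (bo c d)) (bo (oo (To a) (To c)) (oo (To b) (To d)))" for a b c d
      using xi_hom[of "free a" "free b" "free c" "free d"] by (simp add: R_of_def Hom_iff)
    show "xi X Y A B \<in> Hom (oo (bo (fst X) (fst Y)) (bo (fst A) (fst B))) (bo (oo (fst X) (fst A)) (oo (fst Y) (fst B)))"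
      if "is_alg T X" "is_alg T Y" "is_alg T A" "is_alg T B" for X Y A B
      using xi_hom[OF that] .
    show "xi X Y A B \<cdot> om (bm f g) (bm h k)
        = bm (om (snd X \<cdot> Tm f) (snd A \<cdot> Tm h)) (om (snd Y \<cdot> Tm g) (snd B \<cdot> Tm k))
          \<cdot> R_of xi (dm C f) (dm C g) (dm C h) (dm C k)"
      if X: "is_alg T X" and Y: "is_alg T Y" and A: "is_alg T A" and B: "is_alg T B"
        and f: "f \<in> arr C" "cd C f = fst X" and g: "g \<in> arr C" "cd C g = fst Y"
        and h: "h \<in> arr C" "cd C h = fst A" and k: "k \<in> arr C" "cd C k = fst B" for X Y A B f g h k
    proof -
      have [simp]: "xi X Y A B \<in> arr C" "dm C (xi X Y A B) = oo (bo (fst X) (fst Y)) (bo (fst A) (fst B))"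
        using xi_hom[OF X Y A B] by (simp_all add: Hom_iff)
      have "xi X Y A B \<cdot> om (bm f g) (bm h k)
          = xi X Y A B \<cdot> om (bm (snd X \<cdot> Tm f) (snd Y \<cdot> Tm g)) (bm (snd A \<cdot> Tm h) (snd B \<cdot> Tm k))
            \<cdot> om (bm (eta T (dm C f)) (eta T (dm C g))) (bm (eta T (dm C h)) (eta T (dm C k)))"
        using X Y A B f g h k by (simp add: O.tarr_merge B.tarr_merge transpose_comp_eta)
      also have "\<dots> = bm (om (snd X \<cdot> Tm f) (snd A \<cdot> Tm h)) (om (snd Y \<cdot> Tm g) (snd B \<cdot> Tm k))
          \<cdot> R_of xi (dm C f) (dm C g) (dm C h) (dm C k)"
        using comp_eq_comp_right[OF nat[OF alg_hom_transpose[OF X f] alg_hom_transpose[OF Y g]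
              alg_hom_transpose[OF A h] alg_hom_transpose[OF B k]]]
          X Y A B f g h k xi_hom[of "free (dm C f)" "free (dm C g)" "free (dm C h)" "free (dm C k)"]
        by (simp add: R_of_def Hom_iff)
      finally show ?thesis .
    qed
  qed
qed

end

theorem mainTheorem1:
  fixes C :: "('o,'m) cat" and Mo Mb :: "('o,'m) monoidal" and T :: "('o,'m) monad"
    and To2 Tb2 :: "'o \<Rightarrow> 'o \<Rightarrow> 'm" and To0 Tb0 :: "'m"
  assumes "duo_ctx.preduoidal C Mo Mb"
    and "duo_ctx.sep_opmonoidal_monad C Mo Mb T To2 To0 Tb2 Tb0"
  shows
    "(\<forall>R nu varpi iota. duo_ctx.rmatrix C Mo Mb T To2 To0 Tb2 Tb0 R nu varpi iota \<longrightarrow>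
        duo_ctx.duoidal_EM C Mo Mb T To2 To0 Tb2 Tb0 (duo_ctx.xi_of C Mo Mb R) nu varpi iota \<and>
        (\<forall>a b c d. duo_ctx.R_of C Mo Mb T (duo_ctx.xi_of C Mo Mb R) a b c d = R a b c d)) \<and>
     (\<forall>xi nu varpi iota. duo_ctx.duoidal_EM C Mo Mb T To2 To0 Tb2 Tb0 xi nu varpi iota \<longrightarrow>
        duo_ctx.rmatrix C Mo Mb T To2 To0 Tb2 Tb0 (duo_ctx.R_of C Mo Mb T xi) nu varpi iota \<and>
        (\<forall>X Y A B. cat_ctx.is_alg C T X \<longrightarrow> cat_ctx.is_alg C T Y \<longrightarrow>
           cat_ctx.is_alg C T A \<longrightarrow> cat_ctx.is_alg C T B \<longrightarrow>
           duo_ctx.xi_of C Mo Mb (duo_ctx.R_of C Mo Mb T xi) X Y A B = xi X Y A B))"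
proof -
  interpret sep_opmonoidal_laws C Mo Mb T To2 To0 Tb2 Tb0
    using assms by unfold_locales
  have R_to_xi: "duoidal_EM (xi_of R) nu varpi iota \<and> (\<forall>a b c d. R_of (xi_of R) a b c d = R a b c d)"
    if "rmatrix R nu varpi iota" for R nu varpi iota
  proof -
    interpret interchange_correspondence C Mo Mb T To2 To0 Tb2 Tb0 "xi_of R" R
      using that by (rule interchange_correspondence_xi_of)
    show ?thesis
      using that rmatrix_iff_duoidal_EM R_of_eq by blast
  qed
  have xi_to_R: "rmatrix (R_of xi) nu varpi iota \<and> (\<forall>X Y A B. is_alg T X \<longrightarrow> is_alg T Y \<longrightarrow>
      is_alg T A \<longrightarrow> is_alg T B \<longrightarrow> xi_of (R_of xi) X Y A B = xi X Y A B)"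
    if "duoidal_EM xi nu varpi iota" for xi nu varpi iota
  proof -
    interpret interchange_correspondence C Mo Mb T To2 To0 Tb2 Tb0 xi "R_of xi"
      using that by (rule interchange_correspondence_R_of)
    show ?thesis
      using that rmatrix_iff_duoidal_EM xi_of_eq by blast
  qed
  show ?thesis
    using R_to_xi xi_to_R by blast
qed

end
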